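(* Let $n\ge2$. The identity component of $\mathrm{Aut}(\mathfrak{ch}^n)$ is $\mathrm{Aut}_0(\mathfrak{ch}^n)=D\ltimes(Sp\ltimes T)$, where, in block form with block sizes $1,\,2n-2,\,1$, $$D=\left\{\begin{pmatrix}1&0&0\\0&\alpha I_{2n-2}&0\\0&0&\alpha^2\end{pmatrix}:\alpha>0\right\},\quad Sp=\left\{\begin{pmatrix}1&0&0\\0&M&0\\0&0&1\end{pmatrix}:M^TJ_{n-1}M=J_{n-1}\right\}\cong Sp(2n-2,\mathbb R),$$ $$T=\left\{\begin{pmatrix}1&0&0\\ \tfrac12 J_{n-1}v&I_{2n-2}&0\\ a&v^T&1\end{pmatrix}: a\in\mathbb R,\ v\in\mathbb R^{2n-2}\right\}.$$
   Context: $\mathfrak{ch}^n$ is the $2n$-dimensional real Lie algebra with basis $X,Y_1,\dots,Y_{n-1},Z_1,\dots,Z_{n-1},W$ whose only nonzero brackets (up to antisymmetry) are $[X,Y_i]=\tfrac12 Y_i$, $[X,Z_i]=\tfrac12 Z_i$, $[X,W]=W$, $[Z_j,Y_i]=\delta_{ij}W$ for $i,j\in\{1,\dots,n-1\}$. Linear maps are represented by matrices in this ordered basis (the $k$-th column is the coordinate vector of the image of the $k$-th basis vector). $J_{m}=\begin{pmatrix}0&I_m\\-I_m&0\end{pmatrix}$, $I_m$ the identity matrix. $\mathrm{Aut}(\mathfrak{ch}^n)$ is the group of Lie algebra automorphisms of $\mathfrak{ch}^n$. *)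

theory Defs
  imports "HOL-Analysis.Analysis"
begin

text \<open>For ch^n (dimension 2n) the ordered basis
X, Y_1..Y_(n-1), Z_1..Z_(n-1), W has indices 0, 1..n-1, n..2n-2, 2n-1.
The space of matrices carries the product (= Euclidean) topology.\<close>

type_synonym vec = "nat \<Rightarrow> real"
type_synonym mtx = "nat \<Rightarrow> nat \<Rightarrow> real"

definition Mats :: "nat \<Rightarrow> mtx set" where
  "Mats m = {A. \<forall>i j. (m \<le> i \<or> m \<le> j) \<longrightarrow> A i j = 0}"

definition mmul :: "nat \<Rightarrow> mtx \<Rightarrow> mtx \<Rightarrow> mtx" where
  "mmul m A B = (\<lambda>i j. if i < m \<and> j < m then (\<Sum>l<m. A i l * B l j) else 0)"

definition mvec :: "nat \<Rightarrow> mtx \<Rightarrow> vec \<Rightarrow> vec" where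
  "mvec m A u = (\<lambda>i. if i < m then (\<Sum>l<m. A i l * u l) else 0)"

definition mtrans :: "mtx \<Rightarrow> mtx" where
  "mtrans A = (\<lambda>i j. A j i)"

definition mid :: "nat \<Rightarrow> mtx" where
  "mid m = (\<lambda>i j. if i < m \<and> i = j then 1 else 0)"

definition invertible_mtx :: "nat \<Rightarrow> mtx \<Rightarrow> bool" where
  "invertible_mtx m A \<longleftrightarrow> (\<exists>B\<in>Mats m. mmul m A B = mid m \<and> mmul m B A = mid m)"

definition chbr :: "nat \<Rightarrow> vec \<Rightarrow> vec \<Rightarrow> vec" where
  "chbr n u v = (\<lambda>i.
     if 1 \<le> i \<and> i \<le> 2*n - 2 then (u 0 * v i - v 0 * u i) / 2
     else if i = 2*n - 1 then
       (u 0 * v (2*n-1) - v 0 * u (2*n-1))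
       + (\<Sum>p\<in>{1..n-1}. u (p + (n-1)) * v p - v (p + (n-1)) * u p)
     else 0)"

definition Aut_ch :: "nat \<Rightarrow> mtx set" where
  "Aut_ch n = {A \<in> Mats (2*n). invertible_mtx (2*n) A \<and>
      (\<forall>u v. mvec (2*n) A (chbr n u v) = chbr n (mvec (2*n) A u) (mvec (2*n) A v))}"

definition Aut0_ch :: "nat \<Rightarrow> mtx set" where
  "Aut0_ch n = connected_component_of_set (subtopology euclidean (Aut_ch n)) (mid (2*n))"

definition Jmat :: "nat \<Rightarrow> mtx" where
  "Jmat k = (\<lambda>p q. if p < k \<and> q = p + k then 1
                   else if k \<le> p \<and> p < 2*k \<and> q + k = p then -1 else 0)"

definition Dgrp :: "nat \<Rightarrow> mtx set" where
  "Dgrp n = {(\<lambda>i j. if i = 0 \<and> j = 0 then 1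
                    else if 1 \<le> i \<and> i \<le> 2*n-2 \<and> i = j then \<alpha>
                    else if i = 2*n-1 \<and> j = 2*n-1 then \<alpha>^2 else 0) | \<alpha>::real. \<alpha> > 0}"

definition Spgrp :: "nat \<Rightarrow> mtx set" where
  "Spgrp n = {(\<lambda>i j. if i = 0 \<and> j = 0 then 1
                    else if 1 \<le> i \<and> i \<le> 2*n-2 \<and> 1 \<le> j \<and> j \<le> 2*n-2 then M (i-1) (j-1)
                    else if i = 2*n-1 \<and> j = 2*n-1 then 1 else 0) | M.
       M \<in> Mats (2*n-2) \<and>
       mmul (2*n-2) (mmul (2*n-2) (mtrans M) (Jmat (n-1))) M = Jmat (n-1)}"

definition Tgrp :: "nat \<Rightarrow> mtx set" where
  "Tgrp n = {(\<lambda>i j. if i = j \<and> i < 2*n then 1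
                    else if 1 \<le> i \<and> i \<le> 2*n-2 \<and> j = 0 then mvec (2*n-2) (Jmat (n-1)) v (i-1) / 2
                    else if i = 2*n-1 \<and> j = 0 then a
                    else if i = 2*n-1 \<and> 1 \<le> j \<and> j \<le> 2*n-2 then v (j-1) else 0) | a v.
       (\<forall>p\<ge>2*n-2. v p = (0::real))}"

end

theory Submission
  imports Defs
begin

text \<open>An automorphism of \<open>ch\<^sup>n\<close> preserves the derived algebra and the centre; the brackets with
  \<open>X\<close> then force it into block form with first row \<open>(1, 0, 0)\<close> and corner entry \<open>\<lambda> \<noteq> 0\<close>, whose middle
  block is conformally symplectic with factor \<open>\<lambda>\<close> and whose first column is determined by its last
  row. The corner entry is a continuous nonvanishing function on the automorphism group, so
  \<open>\<lambda> > 0\<close> on the identity component, and such a matrix factors as \<open>D(\<alpha>) Sp(M) T(a, v)\<close> with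
  \<open>\<alpha> = sqrt \<lambda>\<close>. Conversely every such product is joined to the identity: \<open>\<alpha>\<close>, \<open>a\<close>, \<open>v\<close> are
  contracted linearly, and \<open>Sp(2n-2)\<close> is generated by symplectic transvections, each of which is
  joined to the identity by a path of transvections.\<close>

definition basis_vec :: "nat \<Rightarrow> vec" where
  "basis_vec i = (\<lambda>p. if p = i then 1 else 0)"

definition mcol :: "mtx \<Rightarrow> nat \<Rightarrow> vec" where
  "mcol M j = (\<lambda>i. M i j)"

definition dotp :: "nat \<Rightarrow> vec \<Rightarrow> vec \<Rightarrow> real" where
  "dotp k r x = (\<Sum>l<k. r l * x l)"

definition vanishes_from :: "nat \<Rightarrow> vec \<Rightarrow> bool" where
  "vanishes_from k x \<longleftrightarrow> (\<forall>p\<ge>k. x p = 0)"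

lemma sum_lessThan_double:
  "(\<Sum>l<2*(m::nat). f l) = (\<Sum>q<m. f q) + (\<Sum>q<m. f (q+m)::'a::comm_monoid_add)"
proof -
  have "(\<Sum>l<2*m. f l) = sum f {0..<m} + sum f {m..<2*m}"
    unfolding lessThan_atLeast0 by (rule sum.atLeastLessThan_concat[symmetric]) auto
  also have "sum f {m..<2*m} = (\<Sum>q<m. f (q+m))"
    using sum.shift_bounds_nat_ivl[of f 0 m m] by (simp add: mult_2 lessThan_atLeast0)
  finally show ?thesis by (simp add: lessThan_atLeast0)
qed

lemma Mats_zero:
  "M \<in> Mats k \<Longrightarrow> k \<le> i \<or> k \<le> j \<Longrightarrow> M i j = 0"
  unfolding Mats_def by auto

lemma mcol_Mats: "M \<in> Mats k \<Longrightarrow> k \<le> j \<Longrightarrow> mcol M j = (\<lambda>_. 0)"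
  unfolding mcol_def Mats_def by auto

lemma mmul_mcol: "mmul k A B i j = (if j < k then mvec k A (mcol B j) i else 0)"
  unfolding mmul_def mvec_def mcol_def by auto

lemma mvec_linear: "mvec k B (\<lambda>i. a * x i + b * y i) = (\<lambda>i. a * mvec k B x i + b * mvec k B y i)"
  unfolding mvec_def by (auto simp: sum.distrib sum_distrib_left algebra_simps intro!: ext)

lemma mvec_scale: "mvec k A (\<lambda>p. c * x p) = (\<lambda>i. c * mvec k A x i)"
  using mvec_linear[of k A c x 0 x] by simp

lemma mvec_zero [simp]: "mvec k B (\<lambda>_. 0) = (\<lambda>_. 0)"
  unfolding mvec_def by auto

lemma mvec_basis_vec: "A \<in> Mats k \<Longrightarrow> j < k \<Longrightarrow> mvec k A (basis_vec j) = mcol A j"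
  unfolding mvec_def mcol_def basis_vec_def Mats_def
  by (auto simp: if_distrib cong: if_cong)

lemma sum_basis_vec: "p < k \<Longrightarrow> (\<Sum>i<k. x i * basis_vec i p) = x p"
  unfolding basis_vec_def by (simp add: if_distrib cong: if_cong)

lemma mid_apply: "mid k i j = (if i < k \<and> i = j then 1 else 0)"
  by (simp add: mid_def)

lemma mcol_mid: "mcol (mid k) i = (if i < k then basis_vec i else (\<lambda>_. 0))"
  unfolding mcol_def mid_def basis_vec_def by auto

lemma mid_Mats: "mid k \<in> Mats k"
  unfolding mid_def Mats_def by auto

lemma mmul_assoc: "mmul k (mmul k A B) C = mmul k A (mmul k B C)"
proof (intro ext)
  fix i j
  show "mmul k (mmul k A B) C i j = mmul k A (mmul k B C) i j"
  proof (cases "i < k \<and> j < k")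
    case True
    have "(\<Sum>l<k. (\<Sum>l'<k. A i l' * B l' l) * C l j) = (\<Sum>l'<k. A i l' * (\<Sum>l<k. B l' l * C l j))"
      by (simp add: sum_distrib_left sum_distrib_right mult.assoc) (rule sum.swap)
    then show ?thesis using True unfolding mmul_def by (auto intro!: sum.cong)
  qed (auto simp: mmul_def)
qed

lemma mmul_Mats: "mmul k A B \<in> Mats k"
  unfolding mmul_def Mats_def by auto

lemma mmul_mid_left:
  assumes "A \<in> Mats k"
  shows "mmul k (mid k) A = A"
proof (intro ext)
  fix i j
  show "mmul k (mid k) A i j = A i j"
  proof (cases "i < k \<and> j < k")
    case True
    have "(\<Sum>l<k. mid k i l * A l j) = (\<Sum>l<k. if l = i then A l j else 0)"
      by (intro sum.cong) (auto simp: mid_apply)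
    then show ?thesis using True by (simp add: mmul_def)
  qed (use assms in \<open>auto simp: mmul_def Mats_def\<close>)
qed

lemma mmul_mid_right:
  assumes "A \<in> Mats k"
  shows "mmul k A (mid k) = A"
proof (intro ext)
  fix i j
  show "mmul k A (mid k) i j = A i j"
  proof (cases "i < k \<and> j < k")
    case True
    have "(\<Sum>l<k. A i l * mid k l j) = (\<Sum>l<k. if l = j then A i l else 0)"
      by (intro sum.cong) (auto simp: mid_apply)
    then show ?thesis using True by (simp add: mmul_def)
  qed (use assms in \<open>auto simp: mmul_def Mats_def\<close>)
qed

lemma mvec_mmul: "mvec k (mmul k A B) u = mvec k A (mvec k B u)"
proof (intro ext)
  fix i
  show "mvec k (mmul k A B) u i = mvec k A (mvec k B u) i"
  proof (cases "i < k")
    case True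
    have "(\<Sum>l<k. (\<Sum>l'<k. A i l' * B l' l) * u l) = (\<Sum>l'<k. A i l' * (\<Sum>l<k. B l' l * u l))"
      by (simp add: sum_distrib_left sum_distrib_right mult.assoc) (rule sum.swap)
    then show ?thesis using True unfolding mmul_def mvec_def by (auto intro!: sum.cong)
  qed (auto simp: mvec_def)
qed

lemma mvec_mid: "mvec k (mid k) u = (\<lambda>i. if i < k then u i else 0)"
proof (intro ext)
  fix i
  have "i < k \<Longrightarrow> (\<Sum>l<k. mid k i l * u l) = (\<Sum>l<k. if l = i then u l else 0)"
    by (intro sum.cong) (auto simp: mid_apply)
  then show "mvec k (mid k) u i = (if i < k then u i else 0)" by (simp add: mvec_def)
qed

lemma invertible_mmul:
  assumes "invertible_mtx k A" "invertible_mtx k B" "B \<in> Mats k"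
  shows "invertible_mtx k (mmul k A B)"
proof -
  obtain A' where A': "A' \<in> Mats k" "mmul k A A' = mid k" "mmul k A' A = mid k"
    using assms(1) unfolding invertible_mtx_def by blast
  obtain B' where B': "mmul k B B' = mid k" "mmul k B' B = mid k"
    using assms(2) unfolding invertible_mtx_def by blast
  have "mmul k (mmul k A B) (mmul k B' A') = mid k"
    by (metis A'(1,2) B'(1) mmul_assoc mmul_mid_left)
  moreover have "mmul k (mmul k B' A') (mmul k A B) = mid k"
    by (metis A'(3) B'(2) assms(3) mmul_assoc mmul_mid_left)
  ultimately show ?thesis unfolding invertible_mtx_def using mmul_Mats by blast
qed

lemma mvec_scaled_mid: "i < k \<Longrightarrow> mvec k (\<lambda>i j. \<alpha> * mid k i j) x i = \<alpha> * x i"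
proof -
  assume "i < k"
  moreover have "(\<Sum>l<k. \<alpha> * mid k i l * x l) = (\<Sum>l<k. if l = i then \<alpha> * x l else 0)"
    by (intro sum.cong) (auto simp: mid_apply)
  ultimately show ?thesis by (simp add: mvec_def)
qed

lemma mmul_scaled_mid_left:
  "mmul k (\<lambda>i j. \<alpha> * mid k i j) B i j = (if i < k \<and> j < k then \<alpha> * B i j else 0)"
  using mvec_scaled_mid[of i k \<alpha> "mcol B j"] unfolding mmul_mcol mcol_def by (auto simp: mvec_def)

lemma mmul_scaled_mid_right:
  "mmul k B (\<lambda>i j. \<alpha> * mid k i j) i j = (if i < k \<and> j < k then \<alpha> * B i j else 0)"
proof (cases "i < k \<and> j < k")
  case True
  have "(\<Sum>l<k. B i l * (\<alpha> * mid k l j)) = (\<Sum>l<k. if l = j then \<alpha> * B i l else 0)"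
    by (intro sum.cong) (auto simp: mid_apply)
  then show ?thesis using True by (simp add: mmul_def)
qed (auto simp: mmul_def)

lemma mmul_scaled_mid:
  "mmul k (\<lambda>i j. \<alpha> * mid k i j) (\<lambda>i j. \<beta> * mid k i j) = (\<lambda>i j. (\<alpha> * \<beta>) * mid k i j)"
  by (intro ext) (simp only: mmul_scaled_mid_left, auto simp: mid_apply)

lemma mvec_half: "mvec k M (\<lambda>i. x i / 2) i = mvec k M x i / 2"
  unfolding mvec_def by (simp add: sum_divide_distrib[symmetric])

lemma mvec_scale_mtx: "mvec k (\<lambda>i j. c * M i j) y = (\<lambda>i. c * mvec k M y i)"
  unfolding mvec_def by (auto intro!: ext simp: sum_distrib_left mult.assoc)

lemma dotp_zero_right [simp]: "dotp k r (\<lambda>_. 0) = 0"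
  unfolding dotp_def by simp

lemma dotp_zero_left [simp]: "dotp k (\<lambda>_. 0) x = 0"
  unfolding dotp_def by simp

lemma dotp_linear: "dotp k r (\<lambda>i. a * x i + b * y i) = a * dotp k r x + b * dotp k r y"
  unfolding dotp_def by (simp add: sum.distrib sum_distrib_left algebra_simps)

lemma dotp_half: "dotp k r (\<lambda>i. x i / 2) = dotp k r x / 2"
  unfolding dotp_def by (simp add: sum_divide_distrib)

lemma dotp_scale_left: "dotp k (\<lambda>j. c * r j) y = c * dotp k r y"
  unfolding dotp_def by (simp add: sum_distrib_left mult.assoc)

lemma dotp_uminus_right: "dotp k r (\<lambda>i. - x i) = - dotp k r x"
  unfolding dotp_def by (simp add: sum_negf[symmetric])

lemma dotp_basis_vec: "j < k \<Longrightarrow> dotp k v (basis_vec j) = v j"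
  unfolding dotp_def basis_vec_def by (simp add: if_distrib cong: if_cong)

lemma dotp_mcol_scaled_mid: "j < k \<Longrightarrow> dotp k r (mcol (\<lambda>i j. \<alpha> * mid k i j) j) = \<alpha> * r j"
  unfolding dotp_def mcol_def by (simp add: mid_apply if_distrib cong: if_cong)

lemma dotp_mcol_mid: "j < k \<Longrightarrow> dotp k v (mcol (mid k) j) = v j"
  using dotp_mcol_scaled_mid[of j k v 1] by simp

lemma invertible_mtx_mcol_nonzero:
  assumes "invertible_mtx k A" "j < k"
  shows "mcol A j \<noteq> (\<lambda>_. 0)"
proof
  assume "mcol A j = (\<lambda>_. 0)"
  obtain A' where "mmul k A' A = mid k" using assms(1) unfolding invertible_mtx_def by blast
  then have "mmul k A' A j j = 1" using assms(2) by (simp add: mid_apply)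
  then have "mvec k A' (mcol A j) j = 1" using assms(2) by (simp add: mmul_mcol)
  with \<open>mcol A j = (\<lambda>_. 0)\<close> show False by simp
qed

definition sform :: "nat \<Rightarrow> vec \<Rightarrow> vec \<Rightarrow> real" where
  "sform m x y = (\<Sum>q<m. x q * y (q+m) - x (q+m) * y q)"

lemma sform_cong:
  "(\<And>i. i < 2*m \<Longrightarrow> x i = x' i) \<Longrightarrow> (\<And>i. i < 2*m \<Longrightarrow> y i = y' i) \<Longrightarrow> sform m x y = sform m x' y'"
  unfolding sform_def by (intro sum.cong) auto

lemma sform_antisym: "sform m x y = - sform m y x"
  unfolding sform_def by (subst sum_negf[symmetric]) (rule sum.cong, auto simp: algebra_simps)

lemma sform_self [simp]: "sform m x x = 0"
  using sform_antisym[of m x x] by simp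

lemma sform_linear_left: "sform m (\<lambda>i. a * x i + b * y i) z = a * sform m x z + b * sform m y z"
  unfolding sform_def sum_distrib_left sum.distrib[symmetric] sum_subtractf[symmetric]
  by (rule sum.cong) (auto simp: algebra_simps)

lemma sform_linear_right: "sform m z (\<lambda>i. a * x i + b * y i) = a * sform m z x + b * sform m z y"
  unfolding sform_def sum_distrib_left sum.distrib[symmetric] sum_subtractf[symmetric]
  by (rule sum.cong) (auto simp: algebra_simps)

lemma sform_sum_left: "sform m (\<lambda>p. \<Sum>i\<in>I. f i p) z = (\<Sum>i\<in>I. sform m (f i) z)"
  unfolding sform_def by (simp add: sum_distrib_right sum_subtractf[symmetric]) (rule sum.swap)

lemma sform_sum_right: "sform m z (\<lambda>p. \<Sum>i\<in>I. f i p) = (\<Sum>i\<in>I. sform m z (f i))"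
  unfolding sform_def by (simp add: sum_distrib_left sum_subtractf[symmetric]) (rule sum.swap)

lemma sform_scale_left: "sform m (\<lambda>p. a * x p) z = a * sform m x z"
  using sform_linear_left[of m a x 0 x z] by simp

lemma sform_scale_right: "sform m z (\<lambda>p. a * x p) = a * sform m z x"
  using sform_linear_right[of m z a x 0 x] by simp

lemma sform_add_left: "sform m (\<lambda>p. x p + y p) z = sform m x z + sform m y z"
  using sform_linear_left[of m 1 x 1 y z] by simp

lemma sform_add_right: "sform m z (\<lambda>p. x p + y p) = sform m z x + sform m z y"
  using sform_linear_right[of m z 1 x 1 y] by simp

lemma sform_diff_left: "sform m (\<lambda>p. y p - x p) z = sform m y z - sform m x z"
  using sform_linear_left[of m 1 y "-1" x z] by simp

lemma sform_zero_left [simp]: "sform m (\<lambda>p. 0) z = 0"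
  unfolding sform_def by simp

lemma sform_zero_right [simp]: "sform m z (\<lambda>p. 0) = 0"
  unfolding sform_def by simp

lemma sform_affine:
  "sform m (\<lambda>i. a * p i + x i) (\<lambda>i. b * p i + y i) = a * sform m p y + b * sform m x p + sform m x y"
  using sform_linear_left[of m a p 1 x] sform_linear_right[of m _ b p 1 y]
  by (simp add: algebra_simps)

lemma sform_basis_right:
  "sform m x (basis_vec j) = (if m \<le> j \<and> j < 2*m then x (j-m) else 0) - (if j < m then x (j+m) else 0)"
proof -
  have "sform m x (basis_vec j) = (\<Sum>q<m. if q + m = j then x q else 0) - (\<Sum>q<m. if q = j then x (q+m) else 0)"
    unfolding sform_def basis_vec_def sum_subtractf[symmetric] by (intro sum.cong) auto
  also have "(\<Sum>q<m. if q + m = j then x q else 0) = (if m \<le> j \<and> j < 2*m then x (j-m) else 0)"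
  proof (cases "m \<le> j \<and> j < 2*m")
    case True
    then have "(\<Sum>q<m. if q + m = j then x q else 0) = (\<Sum>q<m. if q = j - m then x q else 0)"
      by (intro sum.cong) auto
    moreover have "j - m < m" using True by linarith
    ultimately show ?thesis using True by (simp add: sum.delta)
  next
    case False
    then show ?thesis by (intro trans[OF sum.neutral]) auto
  qed
  also have "(\<Sum>q<m. if q = j then x (q+m) else 0) = (if j < m then x (j+m) else 0)"
    by (simp add: sum.delta)
  finally show ?thesis .
qed

lemma sform_basis_left:
  "sform m (basis_vec j) x = (if j < m then x (j+m) else 0) - (if m \<le> j \<and> j < 2*m then x (j-m) else 0)"
  using sform_basis_right[of m x j] sform_antisym[of m "basis_vec j" x] by simp

lemma sform_basis_pair: "k < m \<Longrightarrow> sform m (basis_vec k) (basis_vec (k+m)) = 1"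
  by (simp add: sform_basis_right) (simp add: basis_vec_def)

lemma sform_expand_right: "sform m z x = (\<Sum>l<2*m. sform m z (basis_vec l) * x l)"
proof -
  have "(\<Sum>l<2*m. sform m z (basis_vec l) * x l) =
      (\<Sum>q<m. sform m z (basis_vec q) * x q) + (\<Sum>q<m. sform m z (basis_vec (q+m)) * x (q+m))"
    by (rule sum_lessThan_double)
  also have "(\<Sum>q<m. sform m z (basis_vec q) * x q) = (\<Sum>q<m. - z (q+m) * x q)"
    by (intro sum.cong) (auto simp: sform_basis_right)
  also have "(\<Sum>q<m. sform m z (basis_vec (q+m)) * x (q+m)) = (\<Sum>q<m. z q * x (q+m))"
    by (intro sum.cong) (auto simp: sform_basis_right)
  finally show ?thesis unfolding sform_def by (simp add: sum.distrib[symmetric] algebra_simps)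
qed

lemma sform_nondegenerate:
  assumes "\<And>z. sform m d z = 0" "i < 2*m"
  shows "d i = 0"
proof (cases "i < m")
  case True
  then show ?thesis using assms(1)[of "basis_vec (i+m)"] by (simp add: sform_basis_right)
next
  case False
  then have "i - m < m" "i - m + m = i" "\<not> m \<le> i - m" using assms(2) by auto
  then show ?thesis using assms(1)[of "basis_vec (i-m)"] by (simp add: sform_basis_right)
qed

lemma sform_nonzero_imp_nonzero: "sform m x y \<noteq> 0 \<Longrightarrow> \<exists>p<2*m. x p \<noteq> 0"
proof (rule ccontr)
  assume "sform m x y \<noteq> 0" "\<not> (\<exists>p<2*m. x p \<noteq> 0)"
  then have "sform m x y = sform m (\<lambda>_. 0) y" by (intro sform_cong) auto
  with \<open>sform m x y \<noteq> 0\<close> show False by simp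
qed

definition Symp :: "nat \<Rightarrow> mtx set" where
  "Symp m = {M \<in> Mats (2*m). \<forall>i<2*m. \<forall>j<2*m.
     sform m (mcol M i) (mcol M j) = sform m (basis_vec i) (basis_vec j)}"

lemma Symp_Mats: "M \<in> Symp m \<Longrightarrow> M \<in> Mats (2*m)"
  unfolding Symp_def by simp

lemma sform_bilinear_sum:
  "sform m (\<lambda>p. \<Sum>i\<in>I. x i * c i p) (\<lambda>p. \<Sum>j\<in>J. y j * d j p) =
   (\<Sum>i\<in>I. \<Sum>j\<in>J. x i * y j * sform m (c i) (d j))"
  by (simp add: sform_sum_left sform_sum_right sform_scale_left sform_scale_right sum_distrib_left mult.assoc)

lemma sform_mvec_Symp:
  assumes "M \<in> Symp m"
  shows "sform m (mvec (2*m) M x) (mvec (2*m) M y) = sform m x y"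
proof -
  have "sform m (mvec (2*m) M x) (mvec (2*m) M y) =
      sform m (\<lambda>p. \<Sum>i<2*m. x i * mcol M i p) (\<lambda>p. \<Sum>j<2*m. y j * mcol M j p)"
    by (rule sform_cong) (auto simp: mvec_def mcol_def mult.commute)
  also have "\<dots> = (\<Sum>i<2*m. \<Sum>j<2*m. x i * y j * sform m (mcol M i) (mcol M j))"
    by (rule sform_bilinear_sum)
  also have "\<dots> = (\<Sum>i<2*m. \<Sum>j<2*m. x i * y j * sform m (basis_vec i) (basis_vec j))"
    using assms unfolding Symp_def by (intro sum.cong) auto
  also have "\<dots> = sform m (\<lambda>p. \<Sum>i<2*m. x i * basis_vec i p) (\<lambda>p. \<Sum>j<2*m. y j * basis_vec j p)"
    by (rule sform_bilinear_sum[symmetric])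
  also have "\<dots> = sform m x y"
    by (rule sform_cong) (auto simp: sum_basis_vec)
  finally show ?thesis .
qed

lemma Jmat_eq_sform: "i < 2*m \<Longrightarrow> j < 2*m \<Longrightarrow> Jmat m i j = sform m (basis_vec i) (basis_vec j)"
  unfolding Jmat_def by (simp add: sform_basis_right) (auto simp: basis_vec_def)

lemma Jmat_Mats: "Jmat m \<in> Mats (2*m)"
  unfolding Mats_def Jmat_def by auto

lemma mtrans_Jmat_mmul_entry:
  assumes "i < 2*m" "j < 2*m"
  shows "mmul (2*m) (mmul (2*m) (mtrans M) (Jmat m)) M i j = sform m (mcol M i) (mcol M j)"
proof -
  have row: "(\<Sum>l'<2*m. mtrans M i l' * Jmat m l' l) = sform m (mcol M i) (basis_vec l)"
    if "l < 2*m" for l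
  proof -
    have "(\<Sum>l'<2*m. mtrans M i l' * Jmat m l' l) = - (\<Sum>l'<2*m. sform m (basis_vec l) (basis_vec l') * mcol M i l')"
      using that by (subst sum_negf[symmetric], intro sum.cong)
        (auto simp: Jmat_eq_sform mtrans_def mcol_def sform_antisym[of m "basis_vec l"])
    also have "\<dots> = sform m (mcol M i) (basis_vec l)"
      using sform_expand_right[of m "basis_vec l" "mcol M i"] sform_antisym[of m "mcol M i"] by simp
    finally show ?thesis .
  qed
  have "mmul (2*m) (mmul (2*m) (mtrans M) (Jmat m)) M i j =
      (\<Sum>l<2*m. sform m (mcol M i) (basis_vec l) * mcol M j l)"
    using assms row unfolding mmul_def by (auto simp: mcol_def intro!: sum.cong)
  also have "\<dots> = sform m (mcol M i) (mcol M j)"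
    by (simp add: sform_expand_right[symmetric])
  finally show ?thesis .
qed

lemma Symp_iff_mtrans_Jmat:
  assumes "M \<in> Mats (2*m)"
  shows "mmul (2*m) (mmul (2*m) (mtrans M) (Jmat m)) M = Jmat m \<longleftrightarrow> M \<in> Symp m"
proof
  assume H: "mmul (2*m) (mmul (2*m) (mtrans M) (Jmat m)) M = Jmat m"
  have "sform m (mcol M i) (mcol M j) = sform m (basis_vec i) (basis_vec j)" if "i < 2*m" "j < 2*m" for i j
    using mtrans_Jmat_mmul_entry[OF that, of M] Jmat_eq_sform[OF that] H by simp
  with assms show "M \<in> Symp m" unfolding Symp_def by blast
next
  assume M: "M \<in> Symp m"
  show "mmul (2*m) (mmul (2*m) (mtrans M) (Jmat m)) M = Jmat m"
  proof (intro ext)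
    fix i j
    show "mmul (2*m) (mmul (2*m) (mtrans M) (Jmat m)) M i j = Jmat m i j"
      using M mtrans_Jmat_mmul_entry[of i m j M] Jmat_eq_sform[of i m j] Mats_zero[OF Jmat_Mats]
      unfolding Symp_def by (cases "i < 2*m \<and> j < 2*m") (auto simp: mmul_def)
  qed
qed

abbreviation Jvec :: "nat \<Rightarrow> vec \<Rightarrow> vec" where
  "Jvec m v \<equiv> mvec (2*m) (Jmat m) v"

lemma Jvec_explicit: "Jvec m v i = (if i < m then v (i+m) else if i < 2*m then - v (i-m) else 0)"
proof (cases "i < 2*m")
  case True
  have "Jvec m v i = (\<Sum>l<2*m. sform m (basis_vec i) (basis_vec l) * v l)"
    using True unfolding mvec_def by (auto simp: Jmat_eq_sform intro!: sum.cong)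
  also have "\<dots> = sform m (basis_vec i) v"
    by (simp add: sform_expand_right[symmetric])
  finally show ?thesis using True by (simp add: sform_basis_left)
qed (simp add: mvec_def)

lemma sform_Jvec_left: "sform m (Jvec m v) y = dotp (2*m) v y"
  unfolding sform_def dotp_def sum_lessThan_double Jvec_explicit
  by (simp add: sum.distrib[symmetric] algebra_simps)

lemma Jvec_Jvec: "i < 2*m \<Longrightarrow> Jvec m (Jvec m w) i = - w i"
  unfolding Jvec_explicit by auto

lemma Jvec_uminus: "Jvec m (\<lambda>i. - v i) = (\<lambda>i. - Jvec m v i)"
  unfolding mvec_def by (auto simp: sum_negf[symmetric])

lemma dotp_Jvec_self: "dotp (2*m) v (Jvec m v) = 0"
  using sform_Jvec_left[of m v "Jvec m v"] by simp

subsection \<open>Symplectic transvections generate the symplectic group\<close>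

definition transvect :: "nat \<Rightarrow> vec \<Rightarrow> real \<Rightarrow> vec \<Rightarrow> vec" where
  "transvect m u c x = (\<lambda>p. x p + c * sform m u x * u p)"

definition transvect_mtx :: "nat \<Rightarrow> vec \<Rightarrow> real \<Rightarrow> mtx \<Rightarrow> mtx" where
  "transvect_mtx m u c M = (\<lambda>i j. M i j + c * sform m u (mcol M j) * u i)"

inductive_set transvection_products :: "nat \<Rightarrow> mtx set" for m where
  mid: "mid (2*m) \<in> transvection_products m"
| transvect: "M \<in> transvection_products m \<Longrightarrow> vanishes_from (2*m) u \<Longrightarrow>
    transvect_mtx m u c M \<in> transvection_products m"

lemma mcol_transvect_mtx: "mcol (transvect_mtx m u c M) j = transvect m u c (mcol M j)"
  unfolding mcol_def transvect_mtx_def transvect_def by simp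

lemma sform_transvect_right: "sform m u (transvect m u c x) = sform m u x"
  unfolding transvect_def using sform_linear_right[of m u 1 x "c * sform m u x" u] by simp

lemma sform_transvect: "sform m (transvect m u c x) (transvect m u c y) = sform m x y"
proof -
  have "sform m (transvect m u c x) (transvect m u c y) =
      sform m (\<lambda>p. 1 * x p + (c * sform m u x) * u p) (\<lambda>p. 1 * y p + (c * sform m u y) * u p)"
    unfolding transvect_def by simp
  also have "\<dots> = sform m x y + c * sform m u y * sform m x u + c * sform m u x * sform m u y"
    by (simp only: sform_linear_left sform_linear_right) (simp add: algebra_simps)
  also have "\<dots> = sform m x y"
    using sform_antisym[of m x u] by (simp add: algebra_simps)
  finally show ?thesis .
qed

lemma transvect_inverse: "transvect m u (-c) (transvect m u c x) = x"
  using sform_transvect_right[of m u c x] unfolding transvect_def by (auto simp: algebra_simps)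

lemma transvect_mtx_inverse: "transvect_mtx m u (-c) (transvect_mtx m u c M) = M"
proof (intro ext)
  fix i j
  have "mcol (transvect_mtx m u (-c) (transvect_mtx m u c M)) j = mcol M j"
    by (simp add: mcol_transvect_mtx transvect_inverse)
  then show "transvect_mtx m u (-c) (transvect_mtx m u c M) i j = M i j"
    unfolding mcol_def by meson
qed

lemma transvect_mtx_Mats:
  "M \<in> Mats (2*m) \<Longrightarrow> vanishes_from (2*m) u \<Longrightarrow> transvect_mtx m u c M \<in> Mats (2*m)"
  unfolding Mats_def vanishes_from_def transvect_mtx_def
  by (auto simp: mcol_Mats[unfolded Mats_def] Mats_def)

lemma transvect_mtx_Symp:
  "M \<in> Symp m \<Longrightarrow> vanishes_from (2*m) u \<Longrightarrow> transvect_mtx m u c M \<in> Symp m"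
  unfolding Symp_def by (auto simp: transvect_mtx_Mats mcol_transvect_mtx sform_transvect)

lemma transvection_products_transvect_mtxD:
  "vanishes_from (2*m) u \<Longrightarrow> transvect_mtx m u c M \<in> transvection_products m \<Longrightarrow>
   M \<in> transvection_products m"
  using transvection_products.transvect[of "transvect_mtx m u c M" m u "-c"]
  by (simp add: transvect_mtx_inverse)

lemma mid_Symp: "mid (2*m) \<in> Symp m"
  unfolding Symp_def by (auto simp: mcol_mid mid_Mats)

lemma transvection_products_Symp: "M \<in> transvection_products m \<Longrightarrow> M \<in> Symp m"
  by (induction rule: transvection_products.induct) (auto simp: mid_Symp transvect_mtx_Symp)

text \<open>The converse is proved by Gaussian elimination with transvections: if the first \<open>k\<close>
  symplectic pairs of columns of \<open>M\<close> are already standard, at most four further transvections,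
  each fixing these pairs, make the \<open>k\<close>-th pair standard as well. Transvections along vectors
  vanishing on the first \<open>k\<close> pairs of coordinates (\<open>adapted\<close> vectors) fix the standard pairs.\<close>

definition adapted :: "nat \<Rightarrow> nat \<Rightarrow> vec \<Rightarrow> bool" where
  "adapted m k x \<longleftrightarrow> vanishes_from (2*m) x \<and> (\<forall>q<k. x q = 0 \<and> x (q+m) = 0)"

definition std_pairs :: "nat \<Rightarrow> nat \<Rightarrow> mtx \<Rightarrow> bool" where
  "std_pairs m k M \<longleftrightarrow> (\<forall>q<k. mcol M q = basis_vec q \<and> mcol M (q+m) = basis_vec (q+m))"

lemma adapted_add: "adapted m k x \<Longrightarrow> adapted m k y \<Longrightarrow> adapted m k (\<lambda>p. x p + y p)"
  unfolding adapted_def vanishes_from_def by auto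

lemma adapted_diff: "adapted m k x \<Longrightarrow> adapted m k y \<Longrightarrow> adapted m k (\<lambda>p. y p - x p)"
  unfolding adapted_def vanishes_from_def by auto

lemma adapted_basis_vec:
  "i < 2*m \<Longrightarrow> \<not> i < k \<Longrightarrow> \<not> (m \<le> i \<and> i < m + k) \<Longrightarrow> adapted m k (basis_vec i)"
  unfolding adapted_def vanishes_from_def basis_vec_def by auto

lemma sform_adapted_std:
  assumes "adapted m k u" "q < k" "k \<le> m"
  shows "sform m u (basis_vec q) = 0" "sform m u (basis_vec (q+m)) = 0"
  using assms unfolding adapted_def by (auto simp: sform_basis_right)

lemma adapted_mcol:
  assumes M: "M \<in> Symp m" "std_pairs m k M" "k \<le> m"
    and j: "j < 2*m" "\<not> j < k" "\<not> (m \<le> j \<and> j < m + k)"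
  shows "adapted m k (mcol M j)"
  unfolding adapted_def
proof (intro conjI allI impI)
  show "vanishes_from (2*m) (mcol M j)"
    using M(1) unfolding Symp_def vanishes_from_def Mats_def mcol_def by auto
  fix q assume q: "q < k"
  have std: "mcol M q = basis_vec q" "mcol M (q+m) = basis_vec (q+m)"
    using M(2) q unfolding std_pairs_def by auto
  have qm: "q < m" "q+m < 2*m" using q M(3) by auto
  have "sform m (mcol M j) (mcol M q) = sform m (basis_vec j) (basis_vec q)"
    using M(1) j qm unfolding Symp_def by auto
  then show "mcol M j (q+m) = 0"
    using std qm j q by (simp add: sform_basis_right) (auto simp: basis_vec_def)
  have "sform m (mcol M j) (mcol M (q+m)) = sform m (basis_vec j) (basis_vec (q+m))"
    using M(1) j qm unfolding Symp_def by auto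
  then show "mcol M j q = 0"
    using std qm j q by (simp add: sform_basis_right) (auto simp: basis_vec_def)
qed

text \<open>The transvection along \<open>y - x\<close> maps \<open>x\<close> to \<open>y\<close> as soon as \<open>sform m x y \<noteq> 0\<close>.\<close>

lemma transvect_mcol_to:
  assumes M: "M \<in> Symp m" "std_pairs m k M" "k \<le> m"
    and x: "adapted m k x" "mcol M j = x" and y: "adapted m k y" and nz: "sform m x y \<noteq> 0"
  obtains M' where "M' \<in> Symp m" "std_pairs m k M'" "mcol M' j = y"
    "\<And>j'. sform m (\<lambda>p. y p - x p) (mcol M j') = 0 \<Longrightarrow> mcol M' j' = mcol M j'"
    "M' \<in> transvection_products m \<Longrightarrow> M \<in> transvection_products m"
proof -
  define u where "u = (\<lambda>p. y p - x p)"
  have u: "adapted m k u" unfolding u_def by (rule adapted_diff[OF x(1) y])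
  then have u_vanishes: "vanishes_from (2*m) u" unfolding adapted_def by simp
  have "sform m u x = - sform m x y"
    unfolding u_def sform_diff_left using sform_antisym[of m y x] by simp
  then have c: "(1 / sform m u x) * sform m u x = 1" using nz by simp
  define M' where "M' = transvect_mtx m u (1 / sform m u x) M"
  show ?thesis
  proof (rule that)
    show "M' \<in> Symp m" unfolding M'_def by (rule transvect_mtx_Symp[OF M(1) u_vanishes])
    show "std_pairs m k M'" unfolding std_pairs_def M'_def mcol_transvect_mtx
    proof (intro allI impI conjI)
      fix q assume q: "q < k"
      then have "mcol M q = basis_vec q" "mcol M (q+m) = basis_vec (q+m)"
        using M(2) unfolding std_pairs_def by auto
      then show "transvect m u (1 / sform m u x) (mcol M q) = basis_vec q"
        "transvect m u (1 / sform m u x) (mcol M (q+m)) = basis_vec (q+m)"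
        using sform_adapted_std[OF u q M(3)] unfolding transvect_def by auto
    qed
    show "mcol M' j = y"
      using c unfolding M'_def mcol_transvect_mtx x(2) transvect_def by (auto simp: u_def)
    show "mcol M' j' = mcol M j'" if "sform m (\<lambda>p. y p - x p) (mcol M j') = 0" for j'
      using that unfolding M'_def mcol_transvect_mtx transvect_def u_def by simp
    show "M \<in> transvection_products m" if "M' \<in> transvection_products m"
      using transvection_products_transvect_mtxD[OF u_vanishes] that unfolding M'_def by blast
  qed
qed

lemma adapted_partner:
  assumes "adapted m k x" "k \<le> m" "p < 2*m" "x p \<noteq> 0"
  shows "\<exists>a. adapted m k a \<and> sform m x a \<noteq> 0"
proof (cases "p < m")
  case True
  then have "adapted m k (basis_vec (p+m))" "sform m x (basis_vec (p+m)) = x p"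
    using assms unfolding adapted_def vanishes_from_def basis_vec_def
    by (auto simp: sform_basis_right[unfolded basis_vec_def])
  then show ?thesis using assms by auto
next
  case False
  then have "adapted m k (basis_vec (p-m))" "sform m x (basis_vec (p-m)) = - x p"
    using assms unfolding adapted_def vanishes_from_def basis_vec_def
    by (auto simp: sform_basis_right[unfolded basis_vec_def])
  then show ?thesis using assms by auto
qed

lemma adapted_common_partner:
  assumes x: "adapted m k x" "\<exists>p<2*m. x p \<noteq> 0" and y: "adapted m k y" "\<exists>p<2*m. y p \<noteq> 0"
    and "k \<le> m"
  shows "\<exists>z. adapted m k z \<and> sform m x z \<noteq> 0 \<and> sform m z y \<noteq> 0"
proof -
  obtain a where a: "adapted m k a" "sform m x a \<noteq> 0" using adapted_partner assms by blast
  obtain b where b: "adapted m k b" "sform m y b \<noteq> 0" using adapted_partner assms by blast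
  consider "sform m a y \<noteq> 0" | "sform m x b \<noteq> 0" | "sform m a y = 0" "sform m x b = 0"
    by blast
  then show ?thesis
  proof cases
    case 3
    have "sform m x (\<lambda>p. a p + b p) \<noteq> 0" "sform m (\<lambda>p. a p + b p) y \<noteq> 0"
      using a b 3 sform_antisym[of m b y] by (simp_all add: sform_add_right sform_add_left)
    then show ?thesis using adapted_add[OF a(1) b(1)] by blast
  qed (use a b sform_antisym[of m b y] in auto)
qed

lemma std_pairs_normalize_mcol:
  assumes M: "M \<in> Symp m" "std_pairs m k M" "k < m"
  obtains M' where "M' \<in> Symp m" "std_pairs m k M'" "mcol M' k = basis_vec k"
    "M' \<in> transvection_products m \<Longrightarrow> M \<in> transvection_products m"
proof -
  have km: "k \<le> m" using M by simp
  define x where "x = mcol M k"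
  have x: "adapted m k x" unfolding x_def using M by (intro adapted_mcol) auto
  have e: "adapted m k (basis_vec k)" using M by (intro adapted_basis_vec) auto
  have "sform m x (mcol M (k+m)) = sform m (basis_vec k) (basis_vec (k+m))"
    using M(1) M(3) unfolding Symp_def x_def by auto
  then have "sform m x (mcol M (k+m)) \<noteq> 0" using sform_basis_pair[OF M(3)] by simp
  then have x_nz: "\<exists>p<2*m. x p \<noteq> 0" by (rule sform_nonzero_imp_nonzero)
  have e_nz: "\<exists>p<2*m. basis_vec k p \<noteq> 0" using M(3) by (auto simp: basis_vec_def)
  show ?thesis
  proof (cases "sform m x (basis_vec k) \<noteq> 0")
    case True
    obtain M' where "M' \<in> Symp m" "std_pairs m k M'" "mcol M' k = basis_vec k"
      "M' \<in> transvection_products m \<Longrightarrow> M \<in> transvection_products m"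
      using transvect_mcol_to[OF M(1,2) km x x_def[symmetric] e True] by blast
    then show ?thesis by (rule that)
  next
    case False
    obtain z where z: "adapted m k z" "sform m x z \<noteq> 0" "sform m z (basis_vec k) \<noteq> 0"
      using adapted_common_partner[OF x x_nz e e_nz km] by blast
    obtain M1 where M1: "M1 \<in> Symp m" "std_pairs m k M1" "mcol M1 k = z"
      "M1 \<in> transvection_products m \<Longrightarrow> M \<in> transvection_products m"
      using transvect_mcol_to[OF M(1,2) km x x_def[symmetric] z(1,2)] by blast
    obtain M' where "M' \<in> Symp m" "std_pairs m k M'" "mcol M' k = basis_vec k"
      "M' \<in> transvection_products m \<Longrightarrow> M1 \<in> transvection_products m"
      using transvect_mcol_to[OF M1(1,2) km z(1) M1(3) e z(3)] by blast
    note M' = this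
    show ?thesis
    proof (rule that[OF M'(1-3)])
      assume "M' \<in> transvection_products m"
      then show "M \<in> transvection_products m" using M'(4) M1(4) by blast
    qed
  qed
qed

lemma std_pairs_normalize_second_mcol:
  assumes M: "M \<in> Symp m" "std_pairs m k M" "k < m" "mcol M k = basis_vec k"
    and z: "adapted m k z" "z (k+m) = 1" "sform m (mcol M (k+m)) z \<noteq> 0"
  obtains M' where "M' \<in> Symp m" "std_pairs m k M'" "mcol M' k = basis_vec k" "mcol M' (k+m) = z"
    "M' \<in> transvection_products m \<Longrightarrow> M \<in> transvection_products m"
proof -
  define y where "y = mcol M (k+m)"
  have y: "adapted m k y" unfolding y_def using M by (intro adapted_mcol) auto
  have "sform m (mcol M k) y = sform m (basis_vec k) (basis_vec (k+m))"
    using M(1) M(3) unfolding Symp_def y_def by auto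
  then have "y (k+m) = 1" using sform_basis_pair[OF M(3)] M(3,4) by (simp add: sform_basis_left)
  then have "sform m (\<lambda>p. z p - y p) (mcol M k) = 0"
    using z(2) M(3,4) by (simp add: sform_basis_right)
  moreover obtain M' where "M' \<in> Symp m" "std_pairs m k M'" "mcol M' (k+m) = z"
    "\<And>j'. sform m (\<lambda>p. z p - y p) (mcol M j') = 0 \<Longrightarrow> mcol M' j' = mcol M j'"
    "M' \<in> transvection_products m \<Longrightarrow> M \<in> transvection_products m"
    using transvect_mcol_to[OF M(1,2) _ y y_def[symmetric] z(1)] z(3) M(3) unfolding y_def by auto
  ultimately show ?thesis using M(4) that by auto
qed

lemma std_pairs_Suc:
  assumes M: "M \<in> Symp m" "std_pairs m k M" "k < m" "mcol M k = basis_vec k"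
  obtains M' where "M' \<in> Symp m" "std_pairs m (Suc k) M'"
    "M' \<in> transvection_products m \<Longrightarrow> M \<in> transvection_products m"
proof -
  define y where "y = mcol M (k+m)"
  have e: "adapted m k (basis_vec (k+m))" "basis_vec (k+m) (k+m) = 1"
    using M(3) by (auto intro!: adapted_basis_vec) (simp add: basis_vec_def)
  have Suc_k: "std_pairs m (Suc k) M'"
    if "std_pairs m k M'" "mcol M' k = basis_vec k" "mcol M' (k+m) = basis_vec (k+m)" for M'
    using that unfolding std_pairs_def by (auto simp: less_Suc_eq)
  show ?thesis
  proof (cases "y k \<noteq> 0")
    case True
    then have "sform m y (basis_vec (k+m)) \<noteq> 0" using M(3) by (simp add: sform_basis_right)
    then obtain M' where "M' \<in> Symp m" "std_pairs m k M'" "mcol M' k = basis_vec k"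
      "mcol M' (k+m) = basis_vec (k+m)" "M' \<in> transvection_products m \<Longrightarrow> M \<in> transvection_products m"
      using std_pairs_normalize_second_mcol[OF M e] unfolding y_def by blast
    then show ?thesis using Suc_k that by blast
  next
    case False
    define z where "z = (\<lambda>p. basis_vec k p + basis_vec (k+m) p)"
    have z: "adapted m k z" "z (k+m) = 1"
      unfolding z_def using M(3) by (auto intro!: adapted_add adapted_basis_vec) (simp add: basis_vec_def)
    have "sform m (mcol M k) y = sform m (basis_vec k) (basis_vec (k+m))"
      using M(1,3) unfolding Symp_def y_def by auto
    then have "sform m y (basis_vec k) = - 1"
      using M(4) sform_basis_pair[OF M(3)] sform_antisym[of m y] by simp
    then have "sform m y z \<noteq> 0"
      unfolding z_def sform_add_right using False M(3) by (simp add: sform_basis_right)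
    then obtain M1 where M1: "M1 \<in> Symp m" "std_pairs m k M1" "mcol M1 k = basis_vec k" "mcol M1 (k+m) = z"
      "M1 \<in> transvection_products m \<Longrightarrow> M \<in> transvection_products m"
      using std_pairs_normalize_second_mcol[OF M z] unfolding y_def by blast
    have "sform m (mcol M1 (k+m)) (basis_vec (k+m)) \<noteq> 0"
      unfolding M1(4) z_def sform_add_left using sform_basis_pair[OF M(3)] by simp
    then obtain M' where "M' \<in> Symp m" "std_pairs m k M'" "mcol M' k = basis_vec k"
      "mcol M' (k+m) = basis_vec (k+m)" "M' \<in> transvection_products m \<Longrightarrow> M1 \<in> transvection_products m"
      using std_pairs_normalize_second_mcol[OF M1(1,2) M(3) M1(3) e] by blast
    then show ?thesis using M1(5) Suc_k that by blast
  qed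
qed

lemma std_pairs_all_eq_mid:
  assumes "M \<in> Mats (2*m)" "std_pairs m m M"
  shows "M = mid (2*m)"
proof -
  have "mcol M j = mcol (mid (2*m)) j" for j
  proof (cases "j < m")
    case True
    then show ?thesis using assms(2) unfolding std_pairs_def mcol_mid by auto
  next
    case False
    show ?thesis
    proof (cases "j < 2*m")
      case True
      with False have "j - m < m" "j - m + m = j" by auto
      then have "mcol M j = basis_vec j" using assms(2) unfolding std_pairs_def by metis
      with True show ?thesis by (simp add: mcol_mid)
    qed (use assms(1) in \<open>simp add: mcol_Mats mcol_mid\<close>)
  qed
  then show ?thesis unfolding mcol_def by (intro ext) meson
qed

theorem Symp_transvection_products:
  assumes "M \<in> Symp m"
  shows "M \<in> transvection_products m"
proof -
  have "M \<in> transvection_products m" if "M \<in> Symp m" "std_pairs m k M" "k \<le> m" for k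
    using that
  proof (induction "m - k" arbitrary: k M)
    case 0
    then show ?case
      using std_pairs_all_eq_mid[OF Symp_Mats] transvection_products.mid by auto
  next
    case (Suc d)
    then have km: "k < m" by simp
    obtain M1 where M1: "M1 \<in> Symp m" "std_pairs m k M1" "mcol M1 k = basis_vec k"
      "M1 \<in> transvection_products m \<Longrightarrow> M \<in> transvection_products m"
      using std_pairs_normalize_mcol[OF Suc.prems(1,2) km] by blast
    obtain M2 where M2: "M2 \<in> Symp m" "std_pairs m (Suc k) M2"
      "M2 \<in> transvection_products m \<Longrightarrow> M1 \<in> transvection_products m"
      using std_pairs_Suc[OF M1(1,2) km M1(3)] by blast
    have "M2 \<in> transvection_products m" using Suc.hyps(1)[of "Suc k" M2] Suc.hyps(2) M2 km by simp
    then show ?case using M1 M2 by blast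
  qed
  from this[OF assms, of 0] show ?thesis by (simp add: std_pairs_def)
qed

lemma transvect_mtx_eq_mmul:
  assumes "M \<in> Mats (2*m)" "vanishes_from (2*m) u"
  shows "transvect_mtx m u c M = mmul (2*m) (transvect_mtx m u c (mid (2*m))) M"
proof (intro ext)
  fix i j
  show "transvect_mtx m u c M i j = mmul (2*m) (transvect_mtx m u c (mid (2*m))) M i j"
  proof (cases "i < 2*m \<and> j < 2*m")
    case True
    have "mmul (2*m) (transvect_mtx m u c (mid (2*m))) M i j =
        (\<Sum>l<2*m. (if l = i then M l j else 0) + c * u i * (sform m u (basis_vec l) * M l j))"
      using True unfolding mmul_def transvect_mtx_def
      by (intro trans[OF if_P sum.cong]) (auto simp: mcol_mid algebra_simps mid_apply)
    also have "\<dots> = M i j + c * u i * sform m u (mcol M j)"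
      using True sform_expand_right[of m u "mcol M j"]
      by (simp add: sum.distrib sum_distrib_left[symmetric] mcol_def)
    finally show ?thesis unfolding transvect_mtx_def by simp
  next
    case False
    then show ?thesis using assms mcol_Mats[OF assms(1)]
      unfolding transvect_mtx_def mmul_def vanishes_from_def Mats_def by (auto simp: not_less)
  qed
qed

lemma invertible_transvect_mtx_mid:
  assumes "vanishes_from (2*m) u"
  shows "invertible_mtx (2*m) (transvect_mtx m u c (mid (2*m)))"
proof -
  define T where "T c' = transvect_mtx m u c' (mid (2*m))" for c'
  have T_Mats: "T c' \<in> Mats (2*m)" for c'
    unfolding T_def using transvect_mtx_Mats mid_Mats assms by blast
  have T_inv: "mmul (2*m) (T c') (T (-c')) = mid (2*m)" for c'
    using transvect_mtx_eq_mmul[OF T_Mats assms, of c' "-c'"] transvect_mtx_inverse[of m u "-c'"]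
    unfolding T_def by simp
  show ?thesis
    using T_inv[of c] T_inv[of "-c"] T_Mats unfolding invertible_mtx_def T_def by auto
qed

lemma transvection_products_invertible:
  "M \<in> transvection_products m \<Longrightarrow> invertible_mtx (2*m) M"
proof (induction rule: transvection_products.induct)
  case mid
  show ?case unfolding invertible_mtx_def using mid_Mats mmul_mid_left[OF mid_Mats] by blast
next
  case (transvect M u c)
  have "M \<in> Mats (2*m)" using transvection_products_Symp[OF transvect.hyps(1)] by (rule Symp_Mats)
  then show ?case
    using invertible_mmul[OF invertible_transvect_mtx_mid[OF transvect.hyps(2)] transvect.IH]
      transvect_mtx_eq_mmul[OF _ transvect.hyps(2)] by simp
qed

lemma Symp_invertible: "M \<in> Symp m \<Longrightarrow> invertible_mtx (2*m) M"
  by (rule transvection_products_invertible[OF Symp_transvection_products])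

subsection \<open>Block decomposition along the basis \<open>X | Y, Z | W\<close>\<close>

text \<open>With \<open>n = Suc m\<close>, the coordinates \<open>1 .. 2m\<close> of \<open>ch\<^sup>n\<close> (the \<open>Y\<close>'s and \<open>Z\<close>'s) are shifted down by one,
  so that the bracket of their components is \<open>- sform m\<close>.\<close>

definition blk :: "nat \<Rightarrow> vec \<Rightarrow> mtx \<Rightarrow> real \<Rightarrow> vec \<Rightarrow> real \<Rightarrow> mtx" where
  "blk m p B a r lam = (\<lambda>i j. if i = 0 then (if j = 0 then 1 else 0)
     else if i \<le> 2*m then (if j = 0 then p (i-1) else if j \<le> 2*m then B (i-1) (j-1) else 0)
     else if i = Suc (2*m) then (if j = 0 then a else if j \<le> 2*m then r (j-1)
                                else if j = Suc (2*m) then lam else 0)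
     else 0)"

definition blkv :: "nat \<Rightarrow> real \<Rightarrow> vec \<Rightarrow> real \<Rightarrow> vec" where
  "blkv m u0 x uw = (\<lambda>i. if i = 0 then u0 else if i \<le> 2*m then x (i-1) else if i = Suc (2*m) then uw else 0)"

lemma blk_0 [simp]: "blk m p B a r lam 0 j = (if j = 0 then 1 else 0)"
  by (simp add: blk_def)

lemma blk_Suc_0 [simp]: "i < 2*m \<Longrightarrow> blk m p B a r lam (Suc i) 0 = p i"
  by (simp add: blk_def)

lemma blk_Suc_Suc [simp]: "i < 2*m \<Longrightarrow> j < 2*m \<Longrightarrow> blk m p B a r lam (Suc i) (Suc j) = B i j"
  by (simp add: blk_def)

lemma blk_Suc_last [simp]: "i < 2*m \<Longrightarrow> blk m p B a r lam (Suc i) (Suc (2*m)) = 0"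
  by (simp add: blk_def)

lemma blk_last_0 [simp]: "blk m p B a r lam (Suc (2*m)) 0 = a"
  by (simp add: blk_def)

lemma blk_last_Suc [simp]: "j < 2*m \<Longrightarrow> blk m p B a r lam (Suc (2*m)) (Suc j) = r j"
  by (simp add: blk_def)

lemma blk_last_last [simp]: "blk m p B a r lam (Suc (2*m)) (Suc (2*m)) = lam"
  by (simp add: blk_def)

lemma blkv_0 [simp]: "blkv m u0 x uw 0 = u0"
  by (simp add: blkv_def)

lemma blkv_Suc [simp]: "i < 2*m \<Longrightarrow> blkv m u0 x uw (Suc i) = x i"
  by (simp add: blkv_def)

lemma blkv_last [simp]: "blkv m u0 x uw (Suc (2*m)) = uw"
  by (simp add: blkv_def)

lemma blk_Mats: "blk m p B a r lam \<in> Mats (Suc (Suc (2*m)))"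
  by (auto simp: Mats_def blk_def)

lemma index_cases:
  obtains "i = 0" | i' where "i = Suc i'" "i' < 2*m" | "i = Suc (2*m)" | "Suc (Suc (2*m)) \<le> i"
  by (metis Suc_le_eq less_Suc_eq not0_implies_Suc not_less_eq)

lemma blk_eqI:
  assumes "\<And>i. i < 2*m \<Longrightarrow> p i = p' i" "\<And>i j. i < 2*m \<Longrightarrow> j < 2*m \<Longrightarrow> B i j = B' i j"
    "a = a'" "\<And>j. j < 2*m \<Longrightarrow> r j = r' j" "lam = lam'"
  shows "blk m p B a r lam = blk m p' B' a' r' lam'"
  using assms unfolding blk_def by (intro ext) (auto simp: Suc_le_eq le_imp_diff_is_add)

lemma blkv_eqI:
  assumes "u0 = u0'" "\<And>i. i < 2*m \<Longrightarrow> x i = x' i" "uw = uw'"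
  shows "blkv m u0 x uw = blkv m u0' x' uw'"
  using assms unfolding blkv_def by (intro ext) (auto simp: Suc_le_eq le_imp_diff_is_add)

lemma blkv_eqD:
  assumes "blkv m u0 x uw = blkv m u0' x' uw'"
  shows "u0 = u0'" "\<And>i. i < 2*m \<Longrightarrow> x i = x' i" "uw = uw'"
proof -
  show "u0 = u0'" using fun_cong[OF assms, of 0] by simp
  show "uw = uw'" using fun_cong[OF assms, of "Suc (2*m)"] by simp
  fix i assume "i < 2*m" then show "x i = x' i" using fun_cong[OF assms, of "Suc i"] by simp
qed

lemma blkv_coords: "i < Suc (Suc (2*m)) \<Longrightarrow> blkv m (u 0) (\<lambda>i. u (Suc i)) (u (Suc (2*m))) i = u i"
  unfolding blkv_def by (auto simp: Suc_le_eq less_Suc_eq)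

lemma mvec_blkv_coords:
  "mvec (Suc (Suc (2*m))) A (blkv m (u 0) (\<lambda>i. u (Suc i)) (u (Suc (2*m)))) = mvec (Suc (Suc (2*m))) A u"
  unfolding mvec_def by (auto intro!: ext sum.cong simp: blkv_coords)

lemma sum_block: "(\<Sum>l<Suc (Suc (2*m)). f l) = f 0 + (\<Sum>l<2*m. f (Suc l)) + (f (Suc (2*m)) :: real)"
proof -
  have "(\<Sum>l<Suc (Suc (2*m)). f l) = (\<Sum>l<Suc (2*m). f l) + f (Suc (2*m))"
    by (rule sum.lessThan_Suc)
  also have "(\<Sum>l<Suc (2*m). f l) = f 0 + (\<Sum>l<2*m. f (Suc l))"
    by (rule sum.lessThan_Suc_shift)
  finally show ?thesis .
qed

lemma mvec_block:
  "i < Suc (Suc (2*m)) \<Longrightarrow> mvec (Suc (Suc (2*m))) A v i =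
     A i 0 * v 0 + (\<Sum>l<2*m. A i (Suc l) * v (Suc l)) + A i (Suc (2*m)) * v (Suc (2*m))"
  unfolding mvec_def using sum_block[where m=m and f="\<lambda>l. A i l * v l"] by simp

lemma mvec_blk:
  "mvec (Suc (Suc (2*m))) (blk m p B a r lam) (blkv m u0 x uw) =
   blkv m u0 (\<lambda>i. u0 * p i + mvec (2*m) B x i) (u0 * a + dotp (2*m) r x + lam * uw)"
proof (rule ext)
  fix i
  show "mvec (Suc (Suc (2*m))) (blk m p B a r lam) (blkv m u0 x uw) i =
      blkv m u0 (\<lambda>i. u0 * p i + mvec (2*m) B x i) (u0 * a + dotp (2*m) r x + lam * uw) i"
  proof (cases i rule: index_cases[where m=m])
    case 1
    have "(\<Sum>l<2*m. blk m p B a r lam 0 (Suc l) * blkv m u0 x uw (Suc l)) = 0" by simp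
    then show ?thesis using 1 by (simp add: mvec_block)
  next
    case (2 i')
    have "(\<Sum>l<2*m. blk m p B a r lam (Suc i') (Suc l) * blkv m u0 x uw (Suc l)) = mvec (2*m) B x i'"
      using 2 unfolding mvec_def by (auto intro!: sum.cong)
    then show ?thesis using 2 by (simp add: mvec_block del: blk_Suc_Suc)
  next
    case 3
    have "(\<Sum>l<2*m. blk m p B a r lam (Suc (2*m)) (Suc l) * blkv m u0 x uw (Suc l)) = dotp (2*m) r x"
      unfolding dotp_def by (auto intro!: sum.cong)
    then show ?thesis using 3 by (simp add: mvec_block del: blk_last_Suc)
  next
    case 4
    then show ?thesis by (simp add: mvec_def blkv_def)
  qed
qed

lemma mcol_blk_0: "mcol (blk m p B a r lam) 0 = blkv m 1 p a"
  unfolding mcol_def blk_def blkv_def by (rule ext) auto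

lemma mcol_blk_Suc: "j < 2*m \<Longrightarrow> mcol (blk m p B a r lam) (Suc j) = blkv m 0 (mcol B j) (r j)"
  unfolding mcol_def blk_def blkv_def by (rule ext) auto

lemma mcol_blk_last: "mcol (blk m p B a r lam) (Suc (2*m)) = blkv m 0 (\<lambda>_. 0) lam"
  unfolding mcol_def blk_def blkv_def by (rule ext) auto

lemma mmul_blk:
  "mmul (Suc (Suc (2*m))) (blk m p1 B1 a1 r1 l1) (blk m p2 B2 a2 r2 l2) =
   blk m (\<lambda>i. p1 i + mvec (2*m) B1 p2 i) (mmul (2*m) B1 B2) (a1 + dotp (2*m) r1 p2 + l1 * a2)
      (\<lambda>j. dotp (2*m) r1 (mcol B2 j) + l1 * r2 j) (l1 * l2)"
    (is "?L = ?R")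
proof (intro ext)
  fix i j
  show "?L i j = ?R i j"
  proof (cases j rule: index_cases[where m=m])
    case 1
    have "?L i j = blkv m 1 (\<lambda>i. p1 i + mvec (2*m) B1 p2 i) (a1 + dotp (2*m) r1 p2 + l1 * a2) i"
      using 1 by (simp add: mmul_mcol mcol_blk_0 mvec_blk)
    also have "\<dots> = ?R i j" using 1 fun_cong[OF mcol_blk_0, of m _ _ _ _ _ i] unfolding mcol_def by simp
    finally show ?thesis .
  next
    case (2 j')
    have "?L i j = blkv m 0 (mvec (2*m) B1 (mcol B2 j')) (dotp (2*m) r1 (mcol B2 j') + l1 * r2 j') i"
      using 2 by (simp add: mmul_mcol mcol_blk_Suc mvec_blk)
    also have "blkv m 0 (mvec (2*m) B1 (mcol B2 j')) (dotp (2*m) r1 (mcol B2 j') + l1 * r2 j')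
        = blkv m 0 (mcol (mmul (2*m) B1 B2) j') (dotp (2*m) r1 (mcol B2 j') + l1 * r2 j')"
      using 2 by (intro blkv_eqI) (auto simp: mmul_mcol mcol_def)
    also have "\<dots> i = ?R i j" using 2 fun_cong[OF mcol_blk_Suc, of j' m _ _ _ _ _ i] unfolding mcol_def by simp
    finally show ?thesis .
  next
    case 3
    have "?L i j = blkv m 0 (\<lambda>_. 0) (l1 * l2) i"
      using 3 by (simp add: mmul_mcol mcol_blk_last mvec_blk)
    also have "\<dots> = ?R i j" using 3 fun_cong[OF mcol_blk_last, of m _ _ _ _ _ i] unfolding mcol_def by simp
    finally show ?thesis .
  next
    case 4
    then show ?thesis unfolding mmul_def blk_def by simp
  qed
qed

lemma chbr_blkv:
  "chbr (Suc m) (blkv m u0 x uw) (blkv m v0 y vw) =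
   blkv m 0 (\<lambda>i. (u0 * y i - v0 * x i) / 2) (u0 * vw - v0 * uw - sform m x y)"
proof (intro ext)
  fix i
  have "(\<Sum>p\<in>{1..m}. blkv m u0 x uw (p + m) * blkv m v0 y vw p - blkv m v0 y vw (p + m) * blkv m u0 x uw p)
      = (\<Sum>q<m. blkv m u0 x uw (Suc q + m) * blkv m v0 y vw (Suc q) - blkv m v0 y vw (Suc q + m) * blkv m u0 x uw (Suc q))"
    unfolding One_nat_def by (rule sum.atLeast1_atMost_eq)
  also have "\<dots> = - sform m x y"
    unfolding sform_def by (subst sum_negf[symmetric]) (rule sum.cong, auto simp: algebra_simps)
  finally have last: "(\<Sum>p\<in>{1..m}. blkv m u0 x uw (p + m) * blkv m v0 y vw p
      - blkv m v0 y vw (p + m) * blkv m u0 x uw p) = - sform m x y" .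
  show "chbr (Suc m) (blkv m u0 x uw) (blkv m v0 y vw) i =
      blkv m 0 (\<lambda>i. (u0 * y i - v0 * x i) / 2) (u0 * vw - v0 * uw - sform m x y) i"
  proof (cases i rule: index_cases[where m=m])
    case 4
    then show ?thesis by (simp add: chbr_def blkv_def)
  qed (use last in \<open>simp_all add: chbr_def\<close>)
qed

lemma chbr_blkv_coords:
  "chbr (Suc m) (blkv m (u 0) (\<lambda>i. u (Suc i)) (u (Suc (2*m)))) (blkv m (v 0) (\<lambda>i. v (Suc i)) (v (Suc (2*m))))
   = chbr (Suc m) u v"
proof -
  have "(\<Sum>p\<in>{1..m}. f (p + m) * g p - g (p + m) * f p) = (\<Sum>p\<in>{1..m}. u (p + m) * v p - v (p + m) * u p)"
    if "\<And>i. i < Suc (Suc (2*m)) \<Longrightarrow> f i = u i" "\<And>i. i < Suc (Suc (2*m)) \<Longrightarrow> g i = v i" for f g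
    using that by (intro sum.cong) auto
  then show ?thesis unfolding chbr_def by (intro ext) (auto simp: blkv_coords)
qed

lemma basis_vec_0_blkv: "basis_vec 0 = blkv m 1 (\<lambda>_. 0) 0"
  unfolding basis_vec_def blkv_def by auto

lemma basis_vec_last_blkv: "basis_vec (Suc (2*m)) = blkv m 0 (\<lambda>_. 0) 1"
  unfolding basis_vec_def blkv_def by auto

lemma basis_vec_Suc_blkv: "j < 2*m \<Longrightarrow> basis_vec (Suc j) = blkv m 0 (basis_vec j) 0"
  unfolding basis_vec_def blkv_def by (intro ext) auto

lemma blkv_scale: "blkv m (c * u0) (\<lambda>i. c * x i) (c * uw) = (\<lambda>p. c * blkv m u0 x uw p)"
  unfolding blkv_def by (intro ext) auto

lemma mcol_eq_blkv:
  "A \<in> Mats (Suc (Suc (2*m))) \<Longrightarrow> mcol A j = blkv m (A 0 j) (\<lambda>i. A (Suc i) j) (A (Suc (2*m)) j)"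
  unfolding mcol_def blkv_def Mats_def by (auto intro!: ext)

subsection \<open>Automorphisms in block form\<close>

definition preserves_chbr :: "nat \<Rightarrow> mtx \<Rightarrow> bool" where
  "preserves_chbr n A \<longleftrightarrow>
     (\<forall>u v. mvec (2*n) A (chbr n u v) = chbr n (mvec (2*n) A u) (mvec (2*n) A v))"

lemma Aut_ch_iff:
  "A \<in> Aut_ch n \<longleftrightarrow> A \<in> Mats (2*n) \<and> invertible_mtx (2*n) A \<and> preserves_chbr n A"
  unfolding Aut_ch_def preserves_chbr_def by simp

lemma preserves_chbr_Suc_iff:
  "preserves_chbr (Suc m) A \<longleftrightarrow> (\<forall>u v. mvec (Suc (Suc (2*m))) A (chbr (Suc m) u v) =
     chbr (Suc m) (mvec (Suc (Suc (2*m))) A u) (mvec (Suc (Suc (2*m))) A v))"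
  unfolding preserves_chbr_def by simp

lemma blk_chbr_blkv:
  assumes i: "\<And>y. sform m p (mvec (2*m) B y) = dotp (2*m) r y / 2"
    and ii: "\<And>x y. sform m (mvec (2*m) B x) (mvec (2*m) B y) = lam * sform m x y"
  shows "mvec (Suc (Suc (2*m))) (blk m p B a r lam) (chbr (Suc m) (blkv m u0 x uw) (blkv m v0 y vw)) =
    chbr (Suc m) (mvec (Suc (Suc (2*m))) (blk m p B a r lam) (blkv m u0 x uw))
      (mvec (Suc (Suc (2*m))) (blk m p B a r lam) (blkv m v0 y vw))"
proof -
  define z where "z = (\<lambda>i. (u0 / 2) * y i + (- v0 / 2) * x i)"
  have "(\<lambda>i. (u0 * y i - v0 * x i) / 2) = z" unfolding z_def by (auto simp: field_simps)
  then have L: "mvec (Suc (Suc (2*m))) (blk m p B a r lam) (chbr (Suc m) (blkv m u0 x uw) (blkv m v0 y vw)) =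
      blkv m 0 (mvec (2*m) B z) (dotp (2*m) r z + lam * (u0 * vw - v0 * uw - sform m x y))"
    unfolding chbr_blkv mvec_blk by simp
  have XY: "sform m (\<lambda>i. u0 * p i + mvec (2*m) B x i) (\<lambda>i. v0 * p i + mvec (2*m) B y i)
      = u0 * (dotp (2*m) r y / 2) - v0 * (dotp (2*m) r x / 2) + lam * sform m x y"
    unfolding sform_affine i ii using sform_antisym[of m "mvec (2*m) B x" p] i[of x] by simp
  have rz: "dotp (2*m) r z = (u0/2) * dotp (2*m) r y + (- v0 / 2) * dotp (2*m) r x"
    unfolding z_def dotp_linear ..
  have Bz: "mvec (2*m) B z = (\<lambda>i. (u0/2) * mvec (2*m) B y i + (- v0 / 2) * mvec (2*m) B x i)"
    unfolding z_def mvec_linear ..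
  show ?thesis unfolding L unfolding mvec_blk chbr_blkv
    by (rule blkv_eqI) (simp_all only: XY rz Bz, simp_all add: algebra_simps)
qed

lemma blk_preserves_chbr_iff:
  "preserves_chbr (Suc m) (blk m p B a r lam) \<longleftrightarrow>
     (\<forall>y. sform m p (mvec (2*m) B y) = dotp (2*m) r y / 2) \<and>
     (\<forall>x y. sform m (mvec (2*m) B x) (mvec (2*m) B y) = lam * sform m x y)"
    (is "_ \<longleftrightarrow> (\<forall>y. ?i y) \<and> (\<forall>x y. ?ii x y)")
proof
  let ?A = "blk m p B a r lam"
  assume "preserves_chbr (Suc m) ?A"
  then have H: "mvec (Suc (Suc (2*m))) ?A (chbr (Suc m) u v) =
      chbr (Suc m) (mvec (Suc (Suc (2*m))) ?A u) (mvec (Suc (Suc (2*m))) ?A v)" for u v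
    unfolding preserves_chbr_Suc_iff by blast
  have "?i y" for y
    using blkv_eqD(3)[OF H[of "blkv m 1 (\<lambda>_. 0) 0" "blkv m 0 y 0", unfolded chbr_blkv mvec_blk]]
    by (simp add: dotp_half)
  moreover have "?ii x y" for x y
    using blkv_eqD(3)[OF H[of "blkv m 0 x 0" "blkv m 0 y 0", unfolded chbr_blkv mvec_blk]]
    by simp
  ultimately show "(\<forall>y. ?i y) \<and> (\<forall>x y. ?ii x y)" by blast
next
  assume "(\<forall>y. ?i y) \<and> (\<forall>x y. ?ii x y)"
  then show "preserves_chbr (Suc m) (blk m p B a r lam)"
    unfolding preserves_chbr_Suc_iff
    using blk_chbr_blkv[of m p B r lam] by (metis mvec_blkv_coords chbr_blkv_coords)
qed

text \<open>The brackets \<open>[X, Y\<^sub>i] = Y\<^sub>i/2\<close>, \<open>[Z\<^sub>1, Y\<^sub>1] = W\<close> and \<open>[X, W] = W\<close> force the first row,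
  the last column and the corner entry of a bracket preserving matrix.\<close>

context
  fixes m :: nat and A :: mtx
  assumes A: "A \<in> Mats (Suc (Suc (2*m)))" "preserves_chbr (Suc m) A" and m: "1 \<le> m"
begin

private lemma hom: "mvec (Suc (Suc (2*m))) A (chbr (Suc m) u v) =
    chbr (Suc m) (mvec (Suc (Suc (2*m))) A u) (mvec (Suc (Suc (2*m))) A v)"
  using A(2) unfolding preserves_chbr_Suc_iff by blast

private lemma image_basis_vec: "j < Suc (Suc (2*m)) \<Longrightarrow> mvec (Suc (Suc (2*m))) A (basis_vec j) = mcol A j"
  using mvec_basis_vec[OF A(1)] .

lemma preserves_chbr_first_row: "j < 2*m \<Longrightarrow> A 0 (Suc j) = 0"
proof -
  assume j: "j < 2*m"
  have "chbr (Suc m) (basis_vec 0) (basis_vec (Suc j)) = (\<lambda>p. (1/2) * basis_vec (Suc j) p)"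
    unfolding basis_vec_0_blkv[of m] basis_vec_Suc_blkv[OF j] chbr_blkv blkv_scale[symmetric] by simp
  then have "mvec (Suc (Suc (2*m))) A (chbr (Suc m) (basis_vec 0) (basis_vec (Suc j))) =
      (\<lambda>i. (1/2) * mvec (Suc (Suc (2*m))) A (basis_vec (Suc j)) i)"
    by (simp only: mvec_scale)
  then have "mvec (Suc (Suc (2*m))) A (chbr (Suc m) (basis_vec 0) (basis_vec (Suc j))) 0 = (1/2) * A 0 (Suc j)"
    using j image_basis_vec[of "Suc j"] by (simp add: mcol_def)
  moreover have "chbr (Suc m) u v 0 = 0" for u v by (simp add: chbr_def)
  ultimately show ?thesis using hom[of "basis_vec 0" "basis_vec (Suc j)"] by simp
qed

lemma preserves_chbr_last_mcol:
  "mcol A (Suc (2*m)) = blkv m 0 (\<lambda>_. 0) (A (Suc (2*m)) (Suc (2*m)))"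
proof -
  have m2: "m < 2*m" "0 < 2*m" using m by auto
  have "sform m (basis_vec m) (basis_vec 0) = -1"
    using m2 by (simp add: sform_basis_left) (simp add: basis_vec_def)
  then have "chbr (Suc m) (basis_vec (Suc m)) (basis_vec (Suc 0)) = basis_vec (Suc (2*m))"
    unfolding basis_vec_Suc_blkv[OF m2(1)] basis_vec_Suc_blkv[OF m2(2)] chbr_blkv basis_vec_last_blkv
    by simp
  then have "mcol A (Suc (2*m)) = chbr (Suc m) (mcol A (Suc m)) (mcol A (Suc 0))"
    using hom[of "basis_vec (Suc m)" "basis_vec (Suc 0)"] image_basis_vec m2 by simp
  also have "\<dots> = blkv m 0 (\<lambda>_. 0) (- sform m (\<lambda>i. A (Suc i) (Suc m)) (\<lambda>i. A (Suc i) (Suc 0)))"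
    unfolding mcol_eq_blkv[OF A(1)] chbr_blkv
    using preserves_chbr_first_row[OF m2(1)] preserves_chbr_first_row[OF m2(2)] by simp
  finally have last: "mcol A (Suc (2*m)) =
      blkv m 0 (\<lambda>_. 0) (- sform m (\<lambda>i. A (Suc i) (Suc m)) (\<lambda>i. A (Suc i) (Suc 0)))" .
  then have "A (Suc (2*m)) (Suc (2*m)) = - sform m (\<lambda>i. A (Suc i) (Suc m)) (\<lambda>i. A (Suc i) (Suc 0))"
  proof -
    have "mcol A (Suc (2*m)) (Suc (2*m)) = blkv m 0 (\<lambda>_. 0)
        (- sform m (\<lambda>i. A (Suc i) (Suc m)) (\<lambda>i. A (Suc i) (Suc 0))) (Suc (2*m))"
      by (simp only: last)
    then show ?thesis by (simp add: mcol_def)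
  qed
  with last show ?thesis by simp
qed

lemma preserves_chbr_corner:
  assumes "A (Suc (2*m)) (Suc (2*m)) \<noteq> 0"
  shows "A 0 0 = 1"
proof -
  have "chbr (Suc m) (basis_vec 0) (basis_vec (Suc (2*m))) = basis_vec (Suc (2*m))"
    unfolding basis_vec_0_blkv[of m] basis_vec_last_blkv chbr_blkv by simp
  then have "mcol A (Suc (2*m)) = chbr (Suc m) (mcol A 0) (mcol A (Suc (2*m)))"
    using hom[of "basis_vec 0" "basis_vec (Suc (2*m))"] image_basis_vec by simp
  then have "mcol A (Suc (2*m)) (Suc (2*m)) = chbr (Suc m) (mcol A 0) (mcol A (Suc (2*m))) (Suc (2*m))"
    by simp
  then have "A (Suc (2*m)) (Suc (2*m)) = A 0 0 * A (Suc (2*m)) (Suc (2*m))"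
    unfolding preserves_chbr_last_mcol unfolding mcol_eq_blkv[OF A(1), of 0] chbr_blkv by simp
  with assms show ?thesis by simp
qed

lemma preserves_chbr_eq_blk:
  assumes "A (Suc (2*m)) (Suc (2*m)) \<noteq> 0"
  shows "A = blk m (\<lambda>i. A (Suc i) 0) (\<lambda>i j. A (Suc i) (Suc j)) (A (Suc (2*m)) 0)
      (\<lambda>j. A (Suc (2*m)) (Suc j)) (A (Suc (2*m)) (Suc (2*m)))"
proof (intro ext)
  fix i j
  have last: "A i' (Suc (2*m)) = 0" if "i' \<noteq> Suc (2*m)" for i'
    using fun_cong[OF preserves_chbr_last_mcol, of i'] that by (auto simp: mcol_def blkv_def)
  have out: "A i' j' = 0" if "Suc (Suc (2*m)) \<le> i' \<or> Suc (Suc (2*m)) \<le> j'" for i' j'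
    using A(1) that unfolding Mats_def by auto
  show "A i j = blk m (\<lambda>i. A (Suc i) 0) (\<lambda>i j. A (Suc i) (Suc j)) (A (Suc (2*m)) 0)
      (\<lambda>j. A (Suc (2*m)) (Suc j)) (A (Suc (2*m)) (Suc (2*m))) i j"
    by (cases i rule: index_cases[where m=m]; cases j rule: index_cases[where m=m])
      (simp_all add: preserves_chbr_corner[OF assms] preserves_chbr_first_row last out blk_def)
qed

end

lemma Aut_ch_eq_blk:
  assumes "A \<in> Aut_ch (Suc m)" "1 \<le> m"
  shows "A = blk m (\<lambda>i. A (Suc i) 0) (\<lambda>i j. A (Suc i) (Suc j)) (A (Suc (2*m)) 0)
      (\<lambda>j. A (Suc (2*m)) (Suc j)) (A (Suc (2*m)) (Suc (2*m)))"
    and "A (Suc (2*m)) (Suc (2*m)) \<noteq> 0"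
proof -
  have A: "A \<in> Mats (Suc (Suc (2*m)))" "invertible_mtx (Suc (Suc (2*m))) A" "preserves_chbr (Suc m) A"
    using assms(1) unfolding Aut_ch_iff by auto
  show lam: "A (Suc (2*m)) (Suc (2*m)) \<noteq> 0"
    using invertible_mtx_mcol_nonzero[OF A(2), of "Suc (2*m)"]
      preserves_chbr_last_mcol[OF A(1,3) assms(2)] by (auto simp: blkv_def)
  show "A = blk m (\<lambda>i. A (Suc i) 0) (\<lambda>i j. A (Suc i) (Suc j)) (A (Suc (2*m)) 0)
      (\<lambda>j. A (Suc (2*m)) (Suc j)) (A (Suc (2*m)) (Suc (2*m)))"
    by (rule preserves_chbr_eq_blk[OF A(1,3) assms(2) lam])
qed

definition Dmat :: "nat \<Rightarrow> real \<Rightarrow> mtx" where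
  "Dmat m \<alpha> = blk m (\<lambda>_. 0) (\<lambda>i j. \<alpha> * mid (2*m) i j) 0 (\<lambda>_. 0) (\<alpha>^2)"

definition Smat :: "nat \<Rightarrow> mtx \<Rightarrow> mtx" where
  "Smat m M = blk m (\<lambda>_. 0) M 0 (\<lambda>_. 0) 1"

definition Tmat :: "nat \<Rightarrow> real \<Rightarrow> vec \<Rightarrow> mtx" where
  "Tmat m a v = blk m (\<lambda>i. Jvec m v i / 2) (mid (2*m)) a v 1"

definition Gmat :: "nat \<Rightarrow> real \<Rightarrow> mtx \<Rightarrow> real \<Rightarrow> vec \<Rightarrow> mtx" where
  "Gmat m \<alpha> M a v = blk m (\<lambda>i. \<alpha> * mvec (2*m) M (Jvec m v) i / 2) (\<lambda>i j. \<alpha> * M i j) (\<alpha>^2 * a)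
      (\<lambda>j. \<alpha>^2 * v j) (\<alpha>^2)"

lemma Dgrp_eq: "Dgrp (Suc m) = {Dmat m \<alpha> | \<alpha>. \<alpha> > 0}"
proof -
  have "(\<lambda>i j. if i = 0 \<and> j = 0 then 1
                    else if 1 \<le> i \<and> i \<le> 2*Suc m-2 \<and> i = j then \<alpha>
                    else if i = 2*Suc m-1 \<and> j = 2*Suc m-1 then \<alpha>^2 else 0) = Dmat m \<alpha>" for \<alpha>::real
    unfolding Dmat_def blk_def mid_def by (intro ext) auto
  then show ?thesis unfolding Dgrp_def by auto
qed

lemma Spgrp_eq: "Spgrp (Suc m) = {Smat m M | M. M \<in> Symp m}"
proof -
  have "(\<lambda>i j. if i = 0 \<and> j = 0 then 1
                    else if 1 \<le> i \<and> i \<le> 2*Suc m-2 \<and> 1 \<le> j \<and> j \<le> 2*Suc m-2 then M (i-1) (j-1)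
                    else if i = 2*Suc m-1 \<and> j = 2*Suc m-1 then 1 else 0) = Smat m M" for M
    unfolding Smat_def blk_def by (intro ext) auto
  moreover have "(M \<in> Mats (2*Suc m-2) \<and>
       mmul (2*Suc m-2) (mmul (2*Suc m-2) (mtrans M) (Jmat (Suc m-1))) M = Jmat (Suc m-1)) \<longleftrightarrow>
      M \<in> Symp m" for M
    using Symp_iff_mtrans_Jmat[of M m] by (auto simp: Symp_def)
  ultimately show ?thesis unfolding Spgrp_def by auto
qed

lemma Tgrp_eq: "Tgrp (Suc m) = {Tmat m a v | a v. vanishes_from (2*m) v}"
proof -
  have "(\<lambda>i j. if i = j \<and> i < 2*Suc m then 1
                    else if 1 \<le> i \<and> i \<le> 2*Suc m-2 \<and> j = 0 then mvec (2*Suc m-2) (Jmat (Suc m-1)) v (i-1) / 2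
                    else if i = 2*Suc m-1 \<and> j = 0 then a
                    else if i = 2*Suc m-1 \<and> 1 \<le> j \<and> j \<le> 2*Suc m-2 then v (j-1) else 0) = Tmat m a v" for a v
    unfolding Tmat_def blk_def mid_def by (intro ext) auto
  then show ?thesis unfolding Tgrp_def vanishes_from_def by auto
qed

lemma mid_eq_blk: "mid (Suc (Suc (2*m))) = blk m (\<lambda>_. 0) (mid (2*m)) 0 (\<lambda>_. 0) 1"
  unfolding blk_def mid_def by (intro ext) auto

lemma mid_eq_Dmat: "mid (Suc (Suc (2*m))) = Dmat m 1"
  unfolding Dmat_def mid_eq_blk by (intro blk_eqI) auto

lemma mid_eq_Smat: "mid (Suc (Suc (2*m))) = Smat m (mid (2*m))"
  unfolding Smat_def mid_eq_blk ..

lemma mid_eq_Tmat: "mid (Suc (Suc (2*m))) = Tmat m 0 (\<lambda>_. 0)"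
  unfolding Tmat_def mid_eq_blk by (intro blk_eqI) auto

lemma Dmat_Smat_Tmat:
  assumes "M \<in> Mats (2*m)"
  shows "mmul (Suc (Suc (2*m))) (Dmat m \<alpha>) (mmul (Suc (Suc (2*m))) (Smat m M) (Tmat m a v)) = Gmat m \<alpha> M a v"
  unfolding Dmat_def Smat_def Tmat_def mmul_blk Gmat_def
  using assms by (intro blk_eqI)
    (auto simp: mvec_scaled_mid mmul_scaled_mid_left mmul_mid_right mvec_half power2_eq_square)

lemma Tmat_inverse:
  "mmul (Suc (Suc (2*m))) (Tmat m a v) (Tmat m (-a) (\<lambda>i. - v i)) = mid (Suc (Suc (2*m)))"
  unfolding Tmat_def mmul_blk mid_eq_blk
  by (intro blk_eqI) (auto simp: mvec_mid Jvec_uminus mmul_mid_right mid_Mats dotp_mcol_mid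
      dotp_half dotp_uminus_right dotp_Jvec_self)

lemma Dmat_inverse: "\<alpha> \<noteq> 0 \<Longrightarrow> mmul (Suc (Suc (2*m))) (Dmat m \<alpha>) (Dmat m (1/\<alpha>)) = mid (Suc (Suc (2*m)))"
  unfolding Dmat_def mmul_blk mmul_scaled_mid mid_eq_blk
  by (intro blk_eqI) (auto simp: power2_eq_square)

lemma Smat_inverse:
  "mmul (2*m) M M' = mid (2*m) \<Longrightarrow> mmul (Suc (Suc (2*m))) (Smat m M) (Smat m M') = mid (Suc (Suc (2*m)))"
  unfolding Smat_def mmul_blk mid_eq_blk by (intro blk_eqI) auto

lemma Gmat_invertible:
  assumes "\<alpha> \<noteq> 0" "M \<in> Symp m"
  shows "invertible_mtx (Suc (Suc (2*m))) (Gmat m \<alpha> M a v)"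
proof -
  have D: "invertible_mtx (Suc (Suc (2*m))) (Dmat m \<alpha>)"
    unfolding invertible_mtx_def using Dmat_inverse[of \<alpha> m] Dmat_inverse[of "1/\<alpha>" m] assms(1)
    by (auto simp: Dmat_def intro!: exI[of _ "Dmat m (1/\<alpha>)"] blk_Mats)
  have T: "invertible_mtx (Suc (Suc (2*m))) (Tmat m a v)"
    unfolding invertible_mtx_def using Tmat_inverse[of m a v] Tmat_inverse[of m "-a" "\<lambda>i. - v i"]
    by (auto simp: Tmat_def intro!: exI[of _ "Tmat m (-a) (\<lambda>i. - v i)"] blk_Mats)
  have S: "invertible_mtx (Suc (Suc (2*m))) (Smat m M)"
    using Symp_invertible[OF assms(2)] Smat_inverse unfolding invertible_mtx_def
    by (auto simp: Smat_def intro!: blk_Mats)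
  have "invertible_mtx (Suc (Suc (2*m))) (mmul (Suc (Suc (2*m))) (Dmat m \<alpha>) (mmul (Suc (Suc (2*m))) (Smat m M) (Tmat m a v)))"
    by (intro invertible_mmul D S T mmul_Mats) (simp add: Tmat_def blk_Mats)
  then show ?thesis using Dmat_Smat_Tmat[OF Symp_Mats[OF assms(2)]] by simp
qed

lemma Gmat_Aut_ch:
  assumes "\<alpha> \<noteq> 0" "M \<in> Symp m"
  shows "Gmat m \<alpha> M a v \<in> Aut_ch (Suc m)"
proof -
  have "sform m (\<lambda>i. \<alpha> * mvec (2*m) M (Jvec m v) i / 2) (mvec (2*m) (\<lambda>i j. \<alpha> * M i j) y)
      = dotp (2*m) (\<lambda>j. \<alpha>^2 * v j) y / 2" for y
  proof -
    have "(\<lambda>i. \<alpha> * mvec (2*m) M (Jvec m v) i / 2) = (\<lambda>i. (\<alpha>/2) * mvec (2*m) M (Jvec m v) i)"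
      by auto
    then have "sform m (\<lambda>i. \<alpha> * mvec (2*m) M (Jvec m v) i / 2) (mvec (2*m) (\<lambda>i j. \<alpha> * M i j) y)
        = (\<alpha>/2) * \<alpha> * sform m (mvec (2*m) M (Jvec m v)) (mvec (2*m) M y)"
      unfolding mvec_scale_mtx by (simp only: sform_scale_left sform_scale_right)
    also have "\<dots> = (\<alpha>/2) * \<alpha> * dotp (2*m) v y"
      by (simp add: sform_mvec_Symp[OF assms(2)] sform_Jvec_left)
    finally show ?thesis by (simp add: dotp_scale_left power2_eq_square)
  qed
  moreover have "sform m (mvec (2*m) (\<lambda>i j. \<alpha> * M i j) x) (mvec (2*m) (\<lambda>i j. \<alpha> * M i j) y)
      = \<alpha>^2 * sform m x y" for x y
    unfolding mvec_scale_mtx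
    by (simp add: sform_scale_left sform_scale_right sform_mvec_Symp[OF assms(2)] power2_eq_square)
  ultimately have "preserves_chbr (Suc m) (Gmat m \<alpha> M a v)"
    unfolding Gmat_def blk_preserves_chbr_iff by blast
  then show ?thesis
    using Gmat_invertible[OF assms] unfolding Aut_ch_iff by (simp add: Gmat_def blk_Mats)
qed

lemma blk_invertible_surj:
  assumes "invertible_mtx (Suc (Suc (2*m))) (blk m p B a r lam)"
  shows "\<exists>x. \<forall>i<2*m. mvec (2*m) B x i = z i"
proof -
  let ?N = "Suc (Suc (2*m))"
  obtain A' where A': "mmul ?N (blk m p B a r lam) A' = mid ?N"
    using assms unfolding invertible_mtx_def by blast
  define U where "U = mvec ?N A' (blkv m 0 z 0)"
  have "mvec ?N (blk m p B a r lam) U = mvec ?N (mid ?N) (blkv m 0 z 0)"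
    unfolding U_def mvec_mmul[symmetric] A' ..
  also have "\<dots> = blkv m 0 z 0"
    unfolding mvec_mid by (intro ext) (auto simp: blkv_def)
  finally have e: "blkv m (U 0) (\<lambda>i. U 0 * p i + mvec (2*m) B (\<lambda>i. U (Suc i)) i)
      (U 0 * a + dotp (2*m) r (\<lambda>i. U (Suc i)) + lam * U (Suc (2*m))) = blkv m 0 z 0"
    unfolding mvec_blkv_coords[of m _ U, symmetric] mvec_blk .
  then have "U 0 = 0" by (rule blkv_eqD(1))
  then show ?thesis using blkv_eqD(2)[OF e] by auto
qed

lemma blk_first_mcol_determined:
  assumes i: "\<And>y. sform m p (mvec (2*m) B y) = dotp (2*m) r y / 2"
    and ii: "\<And>x y. sform m (mvec (2*m) B x) (mvec (2*m) B y) = lam * sform m x y"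
    and surj: "\<And>z. \<exists>x. \<forall>i<2*m. mvec (2*m) B x i = z i"
    and "lam \<noteq> 0" "j < 2*m"
  shows "p j = (1 / (2*lam)) * mvec (2*m) B (Jvec m r) j"
proof -
  define q where "q = (\<lambda>i. (1 / (2*lam)) * mvec (2*m) B (Jvec m r) i)"
  have "sform m q (mvec (2*m) B y) = (1 / (2*lam)) * (lam * dotp (2*m) r y)" for y
    unfolding q_def sform_scale_left ii sform_Jvec_left ..
  then have on_image: "sform m (\<lambda>i. p i - q i) (mvec (2*m) B y) = 0" for y
    unfolding sform_diff_left i using \<open>lam \<noteq> 0\<close> by simp
  have "sform m (\<lambda>i. p i - q i) z = 0" for z
  proof -
    obtain x where x: "\<forall>i<2*m. mvec (2*m) B x i = z i" using surj by blast
    have "sform m (\<lambda>i. p i - q i) z = sform m (\<lambda>i. p i - q i) (mvec (2*m) B x)"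
      by (rule sform_cong) (auto simp: x)
    then show ?thesis using on_image by simp
  qed
  from sform_nondegenerate[OF this \<open>j < 2*m\<close>] show ?thesis unfolding q_def by simp
qed

lemma Symp_rescale:
  assumes ii: "\<And>x y. sform m (mvec (2*m) B x) (mvec (2*m) B y) = \<alpha>^2 * sform m x y" and "\<alpha> \<noteq> 0"
  shows "(\<lambda>i j. if i < 2*m \<and> j < 2*m then B i j / \<alpha> else 0) \<in> Symp m"
    (is "?M \<in> _")
  unfolding Symp_def
proof (intro CollectI conjI allI impI)
  show "?M \<in> Mats (2*m)" unfolding Mats_def by auto
  fix i j assume ij: "i < 2*m" "j < 2*m"
  have Bcol: "mvec (2*m) B (basis_vec k) p = B p k" if "k < 2*m" "p < 2*m" for k p
    using that unfolding mvec_def basis_vec_def by (simp add: if_distrib cong: if_cong)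
  have "sform m (mcol ?M i) (mcol ?M j) =
      sform m (\<lambda>p. (1/\<alpha>) * mvec (2*m) B (basis_vec i) p) (\<lambda>p. (1/\<alpha>) * mvec (2*m) B (basis_vec j) p)"
    by (rule sform_cong) (use ij Bcol in \<open>auto simp: mcol_def\<close>)
  also have "\<dots> = (1/\<alpha>) * (1/\<alpha>) * (\<alpha>^2 * sform m (basis_vec i) (basis_vec j))"
    unfolding sform_scale_left sform_scale_right ii by simp
  also have "\<dots> = sform m (basis_vec i) (basis_vec j)"
    using \<open>\<alpha> \<noteq> 0\<close> by (simp add: power2_eq_square)
  finally show "sform m (mcol ?M i) (mcol ?M j) = sform m (basis_vec i) (basis_vec j)" .
qed

theorem Aut_ch_eq_Gmat:
  assumes A: "A \<in> Aut_ch (Suc m)" "1 \<le> m" "A (Suc (2*m)) (Suc (2*m)) > 0"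
  shows "\<exists>\<alpha> M a v. \<alpha> > 0 \<and> M \<in> Symp m \<and> vanishes_from (2*m) v \<and> A = Gmat m \<alpha> M a v"
proof -
  define p where "p = (\<lambda>i. A (Suc i) 0)"
  define B where "B = (\<lambda>i j. A (Suc i) (Suc j))"
  define a where "a = A (Suc (2*m)) 0"
  define r where "r = (\<lambda>j. A (Suc (2*m)) (Suc j))"
  define lam where "lam = A (Suc (2*m)) (Suc (2*m))"
  have A_blk: "A = blk m p B a r lam"
    unfolding p_def B_def a_def r_def lam_def by (rule Aut_ch_eq_blk(1)[OF A(1,2)])
  have "lam > 0" using A(3) unfolding lam_def .
  have hom: "preserves_chbr (Suc m) (blk m p B a r lam)" and inv: "invertible_mtx (Suc (Suc (2*m))) A"
    using A(1) A_blk unfolding Aut_ch_iff by auto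
  have i: "\<And>y. sform m p (mvec (2*m) B y) = dotp (2*m) r y / 2"
    and ii: "\<And>x y. sform m (mvec (2*m) B x) (mvec (2*m) B y) = lam * sform m x y"
    using hom unfolding blk_preserves_chbr_iff by blast+
  have surj: "\<And>z. \<exists>x. \<forall>i<2*m. mvec (2*m) B x i = z i"
    using blk_invertible_surj inv A_blk by metis
  define \<alpha> where "\<alpha> = sqrt lam"
  have \<alpha>: "\<alpha> > 0" "\<alpha>^2 = lam" unfolding \<alpha>_def using \<open>lam > 0\<close> by auto
  define M where "M = (\<lambda>i j. if i < 2*m \<and> j < 2*m then B i j / \<alpha> else 0)"
  define v where "v = (\<lambda>j. if j < 2*m then r j / lam else 0)"
  have M: "M \<in> Symp m" unfolding M_def using ii \<alpha> by (intro Symp_rescale) auto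
  have v: "vanishes_from (2*m) v" unfolding vanishes_from_def v_def by auto
  have Jv: "Jvec m v = (\<lambda>i. (1/lam) * Jvec m r i)"
    unfolding mvec_def v_def by (auto intro!: ext simp: sum_divide_distrib intro!: sum.cong)
  have MB: "mvec (2*m) M X i = (1/\<alpha>) * mvec (2*m) B X i" if "i < 2*m" for X i
    unfolding mvec_def M_def using that by (auto simp: sum_distrib_left intro!: sum.cong)
  have "\<alpha> * mvec (2*m) M (Jvec m v) i / 2 = (1 / (2*lam)) * mvec (2*m) B (Jvec m r) i"
    if "i < 2*m" for i
    using \<alpha> unfolding Jv mvec_scale MB[OF that] by simp
  then have "A = Gmat m \<alpha> M (a / lam) v"
    unfolding A_blk Gmat_def
    using blk_first_mcol_determined[OF i ii surj] \<alpha> \<open>lam > 0\<close>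
    by (intro blk_eqI) (auto simp: M_def v_def)
  then show ?thesis using \<alpha> M v by blast
qed

subsection \<open>The identity component\<close>

lemma continuous_on_if_const [continuous_intros]:
  "continuous_on S f \<Longrightarrow> continuous_on S g \<Longrightarrow> continuous_on S (\<lambda>t. if P then f t else g t)"
  by (cases P) auto

lemma continuous_on_mtx_entry: "continuous_on S (\<lambda>A::mtx. A i j)"
proof -
  have "continuous_on S (\<lambda>A::mtx. A i)"
    by (rule continuous_on_product_then_coordinatewise) (rule continuous_on_id)
  then show ?thesis by (rule continuous_on_product_then_coordinatewise)
qed

lemma continuous_on_Gmat:
  assumes "\<And>i j. continuous_on S (\<lambda>t. M t i j)" "continuous_on S \<alpha>" "continuous_on S a"
    "\<And>i. continuous_on S (\<lambda>t. v t i)"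
  shows "continuous_on S (\<lambda>t. Gmat m (\<alpha> t) (M t) (a t) (v t))"
proof (intro continuous_on_coordinatewise_then_product)
  fix i j
  show "continuous_on S (\<lambda>t. Gmat m (\<alpha> t) (M t) (a t) (v t) i j)"
    unfolding Gmat_def blk_def mvec_def by (intro continuous_intros assms) auto
qed

lemma connected_component_of_path:
  assumes "continuous_on {0..1::real} g" "g ` {0..1} \<subseteq> S"
  shows "connected_component_of (subtopology euclidean S) (g 0) (g 1)"
  unfolding connected_component_of_def
  by (rule exI[of _ "g ` {0..1}"])
    (use assms in \<open>auto simp: connectedin_subtopology intro!: connected_continuous_image\<close>)

lemma Gmat_mid: "Gmat m 1 (mid (2*m)) 0 (\<lambda>_. 0) = mid (Suc (Suc (2*m)))"
  unfolding Gmat_def mid_eq_blk by (intro blk_eqI) auto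

text \<open>Each transvection is joined to the identity by the path \<open>t \<mapsto> transvect_mtx m u (t * c)\<close>,
  and \<open>\<alpha>\<close> is joined to \<open>1\<close> inside the positive reals.\<close>

lemma Gmat_connected_mid:
  assumes "M \<in> transvection_products m" "\<alpha> > 0"
  shows "connected_component_of (subtopology euclidean (Aut_ch (Suc m)))
    (mid (Suc (Suc (2*m)))) (Gmat m \<alpha> M a v)"
  using assms
proof (induction M arbitrary: \<alpha> a v rule: transvection_products.induct)
  case mid
  define g where "g = (\<lambda>t::real. Gmat m (1 + t * (\<alpha> - 1)) (mid (2*m)) (t * a) (\<lambda>i. t * v i))"
  have "1 + t * (\<alpha> - 1) > 0" if "t \<in> {0..1}" for t
  proof (cases "\<alpha> \<ge> 1")
    case False
    then have "t * (1 - \<alpha>) \<le> 1 * (1 - \<alpha>)" using that by (intro mult_right_mono) auto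
    with mid show ?thesis by (simp add: algebra_simps)
  qed (use that in \<open>simp add: add_pos_nonneg\<close>)
  then have "g ` {0..1} \<subseteq> Aut_ch (Suc m)"
    unfolding g_def by (force intro!: Gmat_Aut_ch mid_Symp)
  moreover have "continuous_on {0..1} g" unfolding g_def
    by (intro continuous_on_Gmat continuous_intros)
  ultimately have "connected_component_of (subtopology euclidean (Aut_ch (Suc m))) (g 0) (g 1)"
    by (intro connected_component_of_path)
  moreover have "g 0 = mid (Suc (Suc (2*m)))" "g 1 = Gmat m \<alpha> (mid (2*m)) a v"
    unfolding g_def using Gmat_mid by simp_all
  ultimately show ?case by simp
next
  case (transvect M u c)
  define g where "g = (\<lambda>t::real. Gmat m \<alpha> (transvect_mtx m u (t * c) M) a v)"
  have "g ` {0..1} \<subseteq> Aut_ch (Suc m)"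
    unfolding g_def using transvect transvect_mtx_Symp[OF transvection_products_Symp]
    by (auto intro!: Gmat_Aut_ch)
  moreover have "continuous_on {0..1} g" unfolding g_def transvect_mtx_def
    by (intro continuous_on_Gmat continuous_intros)
  ultimately have "connected_component_of (subtopology euclidean (Aut_ch (Suc m))) (g 0) (g 1)"
    by (intro connected_component_of_path)
  moreover have "g 0 = Gmat m \<alpha> M a v" "g 1 = Gmat m \<alpha> (transvect_mtx m u c M) a v"
    unfolding g_def transvect_mtx_def by simp_all
  ultimately show ?case using transvect.IH[OF transvect.prems] connected_component_of_trans by metis
qed

text \<open>The corner entry is continuous and never vanishes on \<open>Aut_ch\<close>, and it is \<open>1\<close> at the identity.\<close>

lemma Aut0_ch_corner_pos:
  assumes "A \<in> Aut0_ch (Suc m)" "1 \<le> m"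
  shows "A \<in> Aut_ch (Suc m)" "A (Suc (2*m)) (Suc (2*m)) > 0"
proof -
  obtain T where T: "connectedin (subtopology euclidean (Aut_ch (Suc m))) T"
    "mid (Suc (Suc (2*m))) \<in> T" "A \<in> T"
    using assms(1) unfolding Aut0_ch_def connected_component_of_def by auto
  have TA: "T \<subseteq> Aut_ch (Suc m)" and "connected T"
    using T(1) unfolding connectedin_subtopology by auto
  then show "A \<in> Aut_ch (Suc m)" using T(3) by blast
  let ?f = "\<lambda>A::mtx. A (Suc (2*m)) (Suc (2*m))"
  have conn: "connected (?f ` T)"
    using continuous_on_mtx_entry \<open>connected T\<close> by (rule connected_continuous_image)
  have nz: "0 \<notin> ?f ` T" using TA Aut_ch_eq_blk(2)[OF _ assms(2)] by auto
  have "?f (mid (Suc (Suc (2*m)))) = 1" by (simp add: mid_apply)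
  then show "?f A > 0"
    using connectedD_interval[OF conn, of "?f A" 1 0] T(2,3) nz by (force simp: not_less)
qed

theorem Aut0_ch_eq_Gmat:
  assumes "1 \<le> m"
  shows "Aut0_ch (Suc m) = {Gmat m \<alpha> M a v | \<alpha> M a v. \<alpha> > 0 \<and> M \<in> Symp m \<and> vanishes_from (2*m) v}"
proof (intro equalityI subsetI)
  fix A assume "A \<in> Aut0_ch (Suc m)"
  then show "A \<in> {Gmat m \<alpha> M a v | \<alpha> M a v. \<alpha> > 0 \<and> M \<in> Symp m \<and> vanishes_from (2*m) v}"
    using Aut_ch_eq_Gmat[OF _ assms] Aut0_ch_corner_pos[OF _ assms] by blast
next
  fix A assume "A \<in> {Gmat m \<alpha> M a v | \<alpha> M a v. \<alpha> > 0 \<and> M \<in> Symp m \<and> vanishes_from (2*m) v}"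
  then show "A \<in> Aut0_ch (Suc m)"
    unfolding Aut0_ch_def
    using Gmat_connected_mid[OF Symp_transvection_products] by (auto simp: mult_2)
qed

subsection \<open>The semidirect product structure\<close>

lemma DSpT_eq_Gmat:
  "{mmul (Suc (Suc (2*m))) d (mmul (Suc (Suc (2*m))) s t) | d s t.
      d \<in> Dgrp (Suc m) \<and> s \<in> Spgrp (Suc m) \<and> t \<in> Tgrp (Suc m)}
   = {Gmat m \<alpha> M a v | \<alpha> M a v. \<alpha> > 0 \<and> M \<in> Symp m \<and> vanishes_from (2*m) v}"
  unfolding Dgrp_eq Spgrp_eq Tgrp_eq
proof (intro equalityI subsetI)
  fix A assume "A \<in> {Gmat m \<alpha> M a v | \<alpha> M a v. \<alpha> > 0 \<and> M \<in> Symp m \<and> vanishes_from (2*m) v}"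
  then obtain \<alpha> M a v where A: "A = Gmat m \<alpha> M a v" "\<alpha> > 0" "M \<in> Symp m" "vanishes_from (2*m) v"
    by blast
  then have "A = mmul (Suc (Suc (2*m))) (Dmat m \<alpha>) (mmul (Suc (Suc (2*m))) (Smat m M) (Tmat m a v))"
    using Dmat_Smat_Tmat[OF Symp_Mats] by simp
  with A show "A \<in> {mmul (Suc (Suc (2*m))) d (mmul (Suc (Suc (2*m))) s t) | d s t.
      d \<in> {Dmat m \<alpha> | \<alpha>. \<alpha> > 0} \<and> s \<in> {Smat m M | M. M \<in> Symp m} \<and>
      t \<in> {Tmat m a v | a v. vanishes_from (2*m) v}}" by blast
qed (use Dmat_Smat_Tmat[OF Symp_Mats] in blast)

lemma Spgrp_Int_Tgrp: "Spgrp (Suc m) \<inter> Tgrp (Suc m) = {mid (Suc (Suc (2*m)))}"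
proof (intro equalityI subsetI)
  fix A assume "A \<in> Spgrp (Suc m) \<inter> Tgrp (Suc m)"
  then obtain M a v where A: "A = Smat m M" "A = Tmat m a v" "M \<in> Symp m"
    unfolding Spgrp_eq Tgrp_eq by blast
  have "M i j = mid (2*m) i j" if "i < 2*m" "j < 2*m" for i j
    using fun_cong[OF fun_cong[OF trans[OF A(1)[symmetric] A(2)], of "Suc i"], of "Suc j"] that
    unfolding Smat_def Tmat_def by simp
  then have "A = Smat m (mid (2*m))" unfolding A(1) Smat_def by (intro blk_eqI) auto
  then show "A \<in> {mid (Suc (Suc (2*m)))}" using mid_eq_Smat by simp
next
  fix A assume "A \<in> {mid (Suc (Suc (2*m)))}"
  moreover have "vanishes_from (2*m) (\<lambda>_. 0)" by (simp add: vanishes_from_def)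
  ultimately show "A \<in> Spgrp (Suc m) \<inter> Tgrp (Suc m)"
    unfolding Spgrp_eq Tgrp_eq using mid_eq_Smat mid_eq_Tmat mid_Symp by blast
qed

lemma Dgrp_Int_SpT:
  "Dgrp (Suc m) \<inter> {mmul (Suc (Suc (2*m))) s t | s t. s \<in> Spgrp (Suc m) \<and> t \<in> Tgrp (Suc m)}
   = {mid (Suc (Suc (2*m)))}"
proof (intro equalityI subsetI)
  fix A assume "A \<in> Dgrp (Suc m) \<inter> {mmul (Suc (Suc (2*m))) s t | s t. s \<in> Spgrp (Suc m) \<and> t \<in> Tgrp (Suc m)}"
  then obtain \<alpha> M a v where A: "A = Dmat m \<alpha>" "\<alpha> > 0" "A = mmul (Suc (Suc (2*m))) (Smat m M) (Tmat m a v)"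
    unfolding Spgrp_eq Tgrp_eq Dgrp_eq by blast
  have "\<alpha>^2 = 1"
    using arg_cong[OF A(1), of "\<lambda>A. A (Suc (2*m)) (Suc (2*m))"] A(3)
    unfolding Dmat_def Smat_def Tmat_def mmul_blk by simp
  then have "\<alpha> = 1" using A(2) by (simp add: power2_eq_1_iff)
  then show "A \<in> {mid (Suc (Suc (2*m)))}" using A(1) mid_eq_Dmat by simp
next
  fix A assume A: "A \<in> {mid (Suc (Suc (2*m)))}"
  have "mid (Suc (Suc (2*m))) = mmul (Suc (Suc (2*m))) (Smat m (mid (2*m))) (Tmat m 0 (\<lambda>_. 0))"
    using mid_eq_Smat mid_eq_Tmat mmul_mid_left[OF mid_Mats] by metis
  moreover have "vanishes_from (2*m) (\<lambda>_. 0)" by (simp add: vanishes_from_def)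
  ultimately show "A \<in> Dgrp (Suc m) \<inter> {mmul (Suc (Suc (2*m))) s t | s t. s \<in> Spgrp (Suc m) \<and> t \<in> Tgrp (Suc m)}"
    using A mid_eq_Dmat[of m] mid_Symp unfolding Spgrp_eq Tgrp_eq Dgrp_eq by fastforce
qed

text \<open>\<open>Sp\<close> normalises \<open>T\<close>: conjugating the translation part \<open>v\<close> by \<open>M\<close> gives
  \<open>v' = - J M J v\<close>, i.e. \<open>v' = (M\<^sup>-\<^sup>1)\<^sup>T v\<close>.\<close>

lemma Smat_Tmat_commute:
  assumes M: "M \<in> Symp m"
  shows "mmul (Suc (Suc (2*m))) (Smat m M) (Tmat m a v) =
    mmul (Suc (Suc (2*m))) (Tmat m a (\<lambda>i. - Jvec m (mvec (2*m) M (Jvec m v)) i)) (Smat m M)"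
proof -
  define v' where "v' = (\<lambda>i. - Jvec m (mvec (2*m) M (Jvec m v)) i)"
  have Jv': "Jvec m v' i = mvec (2*m) M (Jvec m v) i" if "i < 2*m" for i
    unfolding v'_def Jvec_uminus using Jvec_Jvec[OF that] by simp
  have MM: "M \<in> Mats (2*m)" using M by (rule Symp_Mats)
  have "dotp (2*m) v' (mcol M j) = v j" if j: "j < 2*m" for j
  proof -
    have "dotp (2*m) v' (mcol M j) = sform m (Jvec m v') (mvec (2*m) M (basis_vec j))"
      by (simp add: sform_Jvec_left mvec_basis_vec[OF MM j])
    also have "\<dots> = sform m (mvec (2*m) M (Jvec m v)) (mvec (2*m) M (basis_vec j))"
      by (rule sform_cong) (auto simp: Jv')
    also have "\<dots> = v j" by (simp add: sform_mvec_Symp[OF M] sform_Jvec_left dotp_basis_vec j)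
    finally show ?thesis .
  qed
  then show ?thesis unfolding v'_def[symmetric] Smat_def Tmat_def mmul_blk
    using MM Jv' by (intro blk_eqI) (auto simp: mvec_half mmul_mid_left mmul_mid_right dotp_mcol_mid)
qed

lemma Dmat_commute:
  assumes M: "M \<in> Symp m"
  shows "mmul (Suc (Suc (2*m))) (Dmat m \<alpha>) (mmul (Suc (Suc (2*m))) (Smat m M) (Tmat m a v))
       = mmul (Suc (Suc (2*m))) (mmul (Suc (Suc (2*m))) (Smat m M) (Tmat m (\<alpha>^2 * a) (\<lambda>i. \<alpha> * v i))) (Dmat m \<alpha>)"
proof -
  have MM: "M \<in> Mats (2*m)" using M by (rule Symp_Mats)
  show ?thesis
    unfolding Dmat_Smat_Tmat[OF MM] unfolding Smat_def Tmat_def Dmat_def mmul_blk Gmat_def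
    using MM by (intro blk_eqI)
      (auto simp: mvec_scale mvec_half mmul_mid_right mmul_scaled_mid_right dotp_mcol_scaled_mid
        power2_eq_square fun_eq_iff)
qed

lemma Spgrp_Tgrp_commute:
  assumes "s \<in> Spgrp (Suc m)" "t \<in> Tgrp (Suc m)"
  shows "\<exists>t'\<in>Tgrp (Suc m). mmul (Suc (Suc (2*m))) s t = mmul (Suc (Suc (2*m))) t' s"
proof -
  obtain M a v where "s = Smat m M" "M \<in> Symp m" "t = Tmat m a v"
    using assms unfolding Spgrp_eq Tgrp_eq by blast
  moreover have "vanishes_from (2*m) (\<lambda>i. - Jvec m w i)" for w
    by (simp add: vanishes_from_def mvec_def)
  ultimately show ?thesis unfolding Tgrp_eq using Smat_Tmat_commute by blast
qed

lemma Dgrp_SpT_commute: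
  assumes "d \<in> Dgrp (Suc m)" "s \<in> Spgrp (Suc m)" "t \<in> Tgrp (Suc m)"
  shows "\<exists>s'\<in>Spgrp (Suc m). \<exists>t'\<in>Tgrp (Suc m).
    mmul (Suc (Suc (2*m))) d (mmul (Suc (Suc (2*m))) s t) =
    mmul (Suc (Suc (2*m))) (mmul (Suc (Suc (2*m))) s' t') d"
proof -
  obtain \<alpha> M a v where "d = Dmat m \<alpha>" "s = Smat m M" "M \<in> Symp m" "t = Tmat m a v"
      "vanishes_from (2*m) v"
    using assms unfolding Dgrp_eq Spgrp_eq Tgrp_eq by blast
  moreover have "vanishes_from (2*m) v \<Longrightarrow> vanishes_from (2*m) (\<lambda>i. \<alpha> * v i)"
    by (simp add: vanishes_from_def)
  ultimately show ?thesis
    using assms(2) Dmat_commute unfolding Tgrp_eq by blast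
qed

theorem corollary2p2:
  fixes n :: nat
  assumes "n \<ge> 2"
  shows "Aut0_ch n = {mmul (2*n) d (mmul (2*n) s t) | d s t. d \<in> Dgrp n \<and> s \<in> Spgrp n \<and> t \<in> Tgrp n}
    \<and> Spgrp n \<inter> Tgrp n = {mid (2*n)}
    \<and> Dgrp n \<inter> {mmul (2*n) s t | s t. s \<in> Spgrp n \<and> t \<in> Tgrp n} = {mid (2*n)}
    \<and> (\<forall>s\<in>Spgrp n. \<forall>t\<in>Tgrp n. \<exists>t'\<in>Tgrp n. mmul (2*n) s t = mmul (2*n) t' s)
    \<and> (\<forall>d\<in>Dgrp n. \<forall>s\<in>Spgrp n. \<forall>t\<in>Tgrp n. \<exists>s'\<in>Spgrp n. \<exists>t'\<in>Tgrp n.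
          mmul (2*n) d (mmul (2*n) s t) = mmul (2*n) (mmul (2*n) s' t') d)"
proof -
  obtain m where n: "n = Suc m" and "1 \<le> m" using assms by (cases n) auto
  have N: "2 * n = Suc (Suc (2*m))" using n by simp
  show ?thesis unfolding N unfolding n
  proof (intro conjI ballI)
    show "Aut0_ch (Suc m) = {mmul (Suc (Suc (2*m))) d (mmul (Suc (Suc (2*m))) s t) | d s t.
        d \<in> Dgrp (Suc m) \<and> s \<in> Spgrp (Suc m) \<and> t \<in> Tgrp (Suc m)}"
      unfolding Aut0_ch_eq_Gmat[OF \<open>1 \<le> m\<close>] DSpT_eq_Gmat ..
  qed (simp_all add: Spgrp_Int_Tgrp Dgrp_Int_SpT Spgrp_Tgrp_commute Dgrp_SpT_commute)
qed

end
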